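(* Let $(R,\mathfrak m)$ be a noetherian local ring, $\nu$ a valuation centered on $R$, $\nu=\nu_1\circ\nu_2$ a decomposition, and $\mathfrak p=\mathfrak C_{\nu_1}(R)$ (so $\nu_2$ is centered on $R/\mathfrak p$). For each local blowing up $R/\mathfrak p\to\overline R^{(1)}$ with respect to $\nu_2$, there exists a local blowing up $R\to R^{(1)}$ with respect to $\nu$ such that $R^{(1)}/\mathfrak p^{(1)}\simeq\overline R^{(1)}$ and $R_{\mathfrak p}\simeq R^{(1)}_{\mathfrak p^{(1)}}$, where $\mathfrak p^{(1)}=\mathfrak C_{\nu_1}(R^{(1)})$.
   Context: All rings are commutative noetherian with $1$. A valuation on a ring $R$ is a map $\nu:R\to\Gamma\cup\{\infty\}$ ($\Gamma$ an ordered abelian group) with $\nu(ab)=\nu(a)+\nu(b)$, $\nu(a+b)\ge\min\{\nu(a),\nu(b)\}$, $\nu(1)=0$, $\nu(0)=\infty$, whose support $\mathrm{supp}(\nu)=\{a:\nu(a)=\infty\}$ is a minimal prime ideal; it extends to localizations at multiplicative sets disjoint from the support via $\nu(a/s)=\nu(a)-\nu(s)$ and restricts to subrings, implicitly. $\nu$ has a center on $R$ if $\nu\ge0$ on $R$; its center is $\mathfrak C_\nu(R)=\{a:\nu(a)>0\}$. $\nu$ is centered on a local ring $(R,\mathfrak m)$ if $\nu\ge0$ on $R$ and $\nu>0$ on $\mathfrak m$. $\nu R$ denotes the subgroup of $\Gamma$ generated by the finite values of $\nu$. Local blowing up: for $b\in R\setminus\mathrm{supp}(\nu)$ let $J(b)=\bigcup_{i\ge1}\mathrm{ann}_R(b^i)$,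 so $R/J(b)\subseteq R_b$. Given $a_1,\ldots,a_r\in R$ with $\nu(a_i)\ge\nu(b)$, let $R'=(R/J(b))[a_1/b,\ldots,a_r/b]\subseteq R_b$ and $R^{(1)}=R'_{\mathfrak C_\nu(R')}$; the canonical map $R\to R^{(1)}$ is the local blowing up of $R$ with respect to $\nu$ along $(b,a_1,\ldots,a_r)$. Decomposition: let $\Delta$ be a convex subgroup of $\nu R$. Define $\nu_1(a)=\nu(a)+\Delta\in\nu R/\Delta$ (and $\infty$ if $\nu(a)=\infty$); $\nu_1$ is a valuation with a center on $R$, and $\mathfrak p=\mathfrak C_{\nu_1}(R)=\{a:\nu(a)>\delta\ \forall\delta\in\Delta\}$. Define $\nu_2$ on $R/\mathfrak p$ by $\nu_2(a+\mathfrak p)=\nu(a)$ for $a\notin\mathfrak p$, $\infty$ for $a\in\mathfrak p$. We write $\nu=\nu_1\circ\nu_2$. On a local blowing up $R^{(1)}$ of $R$ with respect to $\nu$, $\nu_1$ is defined by the same formula from the extension of $\nu$. *)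

theory Defs
  imports "HOL-Algebra.Algebra"
begin

section \<open>Extended values: \<Gamma> \<union> {\<infinity>}, with None playing the role of \<infinity>\<close>

fun vadd :: "'g::linordered_ab_group_add option \<Rightarrow> 'g option \<Rightarrow> 'g option" where
  "vadd (Some x) (Some y) = Some (x + y)"
| "vadd _ _ = None"

fun vsub :: "'g::linordered_ab_group_add option \<Rightarrow> 'g option \<Rightarrow> 'g option" where
  "vsub (Some x) (Some y) = Some (x - y)"
| "vsub _ _ = None"

fun vle :: "'g::linordered_ab_group_add option \<Rightarrow> 'g option \<Rightarrow> bool" where
  "vle _ None = True"
| "vle None (Some _) = False"
| "vle (Some x) (Some y) = (x \<le> y)"

definition vlt :: "'g::linordered_ab_group_add option \<Rightarrow> 'g option \<Rightarrow> bool" where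
  "vlt x y \<longleftrightarrow> vle x y \<and> x \<noteq> y"

definition vmin :: "'g::linordered_ab_group_add option \<Rightarrow> 'g option \<Rightarrow> 'g option" where
  "vmin x y = (if vle x y then x else y)"

definition minimal_prime :: "'a set \<Rightarrow> ('a, 'b) ring_scheme \<Rightarrow> bool" where
  "minimal_prime P R \<longleftrightarrow> primeideal P R \<and> (\<forall>Q. primeideal Q R \<and> Q \<subseteq> P \<longrightarrow> Q = P)"

definition noeth_local_ring :: "('a, 'b) ring_scheme \<Rightarrow> 'a set \<Rightarrow> bool" where
  "noeth_local_ring R m \<longleftrightarrow> cring R \<and> noetherian_ring R \<and> maximalideal m R \<and>
     (\<forall>M. maximalideal M R \<longrightarrow> M = m)"

definition loc_rel :: "('a, 'b) ring_scheme \<Rightarrow> 'a set \<Rightarrow> (('a \<times> 'a) \<times> ('a \<times> 'a)) set" where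
  "loc_rel R S = {((a, s), (c, t)). a \<in> carrier R \<and> c \<in> carrier R \<and> s \<in> S \<and> t \<in> S \<and>
      (\<exists>u\<in>S. u \<otimes>\<^bsub>R\<^esub> (a_minus R (a \<otimes>\<^bsub>R\<^esub> t) (c \<otimes>\<^bsub>R\<^esub> s)) = \<zero>\<^bsub>R\<^esub>)}"

definition frac :: "('a, 'b) ring_scheme \<Rightarrow> 'a set \<Rightarrow> 'a \<Rightarrow> 'a \<Rightarrow> ('a \<times> 'a) set" where
  "frac R S a s = loc_rel R S `` {(a, s)}"

definition pick :: "('a \<times> 'a) set \<Rightarrow> 'a \<times> 'a" where
  "pick U = (SOME q. q \<in> U)"

definition loc :: "('a, 'b) ring_scheme \<Rightarrow> 'a set \<Rightarrow> ('a \<times> 'a) set ring" where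
  "loc R S = \<lparr> carrier = (carrier R \<times> S) // loc_rel R S,
     monoid.mult = (\<lambda>U V. let (a, s) = pick U; (c, t) = pick V in
                frac R S (a \<otimes>\<^bsub>R\<^esub> c) (s \<otimes>\<^bsub>R\<^esub> t)),
     monoid.one = frac R S \<one>\<^bsub>R\<^esub> \<one>\<^bsub>R\<^esub>,
     ring.zero = frac R S \<zero>\<^bsub>R\<^esub> \<one>\<^bsub>R\<^esub>,
     ring.add = (\<lambda>U V. let (a, s) = pick U; (c, t) = pick V in
                frac R S ((a \<otimes>\<^bsub>R\<^esub> t) \<oplus>\<^bsub>R\<^esub> (c \<otimes>\<^bsub>R\<^esub> s)) (s \<otimes>\<^bsub>R\<^esub> t)) \<rparr>"

definition loc_prime :: "('a, 'b) ring_scheme \<Rightarrow> 'a set \<Rightarrow> ('a \<times> 'a) set ring" where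
  "loc_prime R P = loc R (carrier R - P)"

definition vsupp :: "('a, 'b) ring_scheme \<Rightarrow> ('a \<Rightarrow> 'g::linordered_ab_group_add option) \<Rightarrow> 'a set" where
  "vsupp R \<nu> = {a \<in> carrier R. \<nu> a = None}"

definition valuation :: "('a, 'b) ring_scheme \<Rightarrow> ('a \<Rightarrow> 'g::linordered_ab_group_add option) \<Rightarrow> bool" where
  "valuation R \<nu> \<longleftrightarrow>
     (\<forall>a\<in>carrier R. \<forall>b\<in>carrier R. \<nu> (a \<otimes>\<^bsub>R\<^esub> b) = vadd (\<nu> a) (\<nu> b)) \<and>
     (\<forall>a\<in>carrier R. \<forall>b\<in>carrier R. vle (vmin (\<nu> a) (\<nu> b)) (\<nu> (a \<oplus>\<^bsub>R\<^esub> b))) \<and>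
     \<nu> \<one>\<^bsub>R\<^esub> = Some 0 \<and> \<nu> \<zero>\<^bsub>R\<^esub> = None \<and>
     minimal_prime (vsupp R \<nu>) R"

definition has_center :: "('a, 'b) ring_scheme \<Rightarrow> ('a \<Rightarrow> 'g::linordered_ab_group_add option) \<Rightarrow> bool" where
  "has_center R \<nu> \<longleftrightarrow> (\<forall>a\<in>carrier R. vle (Some 0) (\<nu> a))"

definition vcenter :: "('a, 'b) ring_scheme \<Rightarrow> ('a \<Rightarrow> 'g::linordered_ab_group_add option) \<Rightarrow> 'a set" where
  "vcenter R \<nu> = {a \<in> carrier R. vlt (Some 0) (\<nu> a)}"

definition centered_on :: "('a, 'b) ring_scheme \<Rightarrow> 'a set \<Rightarrow> ('a \<Rightarrow> 'g::linordered_ab_group_add option) \<Rightarrow> bool" where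
  "centered_on R m \<nu> \<longleftrightarrow> has_center R \<nu> \<and> (\<forall>a\<in>m. vlt (Some 0) (\<nu> a))"

definition ext_val :: "('a \<Rightarrow> 'g::linordered_ab_group_add option) \<Rightarrow> ('a \<times> 'a) set \<Rightarrow> 'g option" where
  "ext_val \<nu> U = (case pick U of (a, s) \<Rightarrow> vsub (\<nu> a) (\<nu> s))"

definition add_subgroup :: "'g::linordered_ab_group_add set \<Rightarrow> bool" where
  "add_subgroup H \<longleftrightarrow> 0 \<in> H \<and> (\<forall>x\<in>H. \<forall>y\<in>H. x + y \<in> H) \<and> (\<forall>x\<in>H. - x \<in> H)"

definition value_group :: "('a, 'b) ring_scheme \<Rightarrow> ('a \<Rightarrow> 'g::linordered_ab_group_add option) \<Rightarrow> 'g set" where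
  "value_group R \<nu> = \<Inter>{H. add_subgroup H \<and> {g. \<exists>a\<in>carrier R. \<nu> a = Some g} \<subseteq> H}"

definition convex_subgroup :: "'g::linordered_ab_group_add set \<Rightarrow> 'g set \<Rightarrow> bool" where
  "convex_subgroup D G \<longleftrightarrow> add_subgroup D \<and> D \<subseteq> G \<and>
     (\<forall>x\<in>D. \<forall>y\<in>D. \<forall>z\<in>G. x \<le> z \<and> z \<le> y \<longrightarrow> z \<in> D)"

text \<open>Center of \<nu>1 (the valuation \<nu>(a) + \<Delta> with values in \<nu>R/\<Delta>):
  {a. \<nu>(a) > \<delta> for all \<delta> \<in> \<Delta>}, as in the paper.\<close>
definition center1 :: "('a, 'b) ring_scheme \<Rightarrow> ('a \<Rightarrow> 'g::linordered_ab_group_add option) \<Rightarrow> 'g set \<Rightarrow> 'a set" where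
  "center1 R \<nu> D = {a \<in> carrier R. \<forall>\<delta>\<in>D. vlt (Some \<delta>) (\<nu> a)}"

definition nu2 :: "('a, 'b) ring_scheme \<Rightarrow> ('a \<Rightarrow> 'g::linordered_ab_group_add option) \<Rightarrow> 'a set \<Rightarrow> 'a set \<Rightarrow> 'g option" where
  "nu2 R \<nu> P U = (if U \<subseteq> P then None else \<nu> (SOME a. a \<in> U))"

definition powers :: "('a, 'b) ring_scheme \<Rightarrow> 'a \<Rightarrow> 'a set" where
  "powers R b = {b [^]\<^bsub>R\<^esub> (n::nat) | n. True}"

definition loc_at :: "('a, 'b) ring_scheme \<Rightarrow> 'a \<Rightarrow> ('a \<times> 'a) set ring" where
  "loc_at R b = loc R (powers R b)"

text \<open>R' = (R/J(b))[a_1/b, ..., a_r/b] \<subseteq> R_b; here R/J(b) is the image of R in R_b.\<close>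
definition blowup_alg :: "('a, 'b) ring_scheme \<Rightarrow> 'a \<Rightarrow> 'a list \<Rightarrow> ('a \<times> 'a) set ring" where
  "blowup_alg R b as = (loc_at R b) \<lparr> carrier :=
      generate_ring (loc_at R b)
        ((\<lambda>x. frac R (powers R b) x \<one>\<^bsub>R\<^esub>) ` carrier R \<union>
         (\<lambda>a. frac R (powers R b) a b) ` set as) \<rparr>"

definition blowup :: "('a, 'b) ring_scheme \<Rightarrow> ('a \<Rightarrow> 'g::linordered_ab_group_add option) \<Rightarrow> 'a \<Rightarrow> 'a list
    \<Rightarrow> (('a \<times> 'a) set \<times> ('a \<times> 'a) set) set ring" where
  "blowup R \<nu> b as = loc_prime (blowup_alg R b as) (vcenter (blowup_alg R b as) (ext_val \<nu>))"

definition blowup_val :: "('a \<Rightarrow> 'g::linordered_ab_group_add option) \<Rightarrow> (('a \<times> 'a) set \<times> ('a \<times> 'a) set) set \<Rightarrow> 'g option" where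
  "blowup_val \<nu> = ext_val (ext_val \<nu>)"

definition blowup_data :: "('a, 'b) ring_scheme \<Rightarrow> ('a \<Rightarrow> 'g::linordered_ab_group_add option) \<Rightarrow> 'a \<Rightarrow> 'a list \<Rightarrow> bool" where
  "blowup_data R \<nu> b as \<longleftrightarrow> b \<in> carrier R - vsupp R \<nu> \<and> set as \<subseteq> carrier R \<and>
     (\<forall>a\<in>set as. vle (\<nu> b) (\<nu> a))"

end

theory Submission
  imports Defs
begin

text \<open>Write \<open>P\<close> for the centre of \<open>\<nu>\<^sub>1\<close> on \<open>R\<close>, \<open>R1\<close> for the blowing up of \<open>R\<close> and \<open>P1\<close> for the
  centre of \<open>\<nu>\<^sub>1\<close> on \<open>R1\<close>. Lift the blowing-up data of \<open>R/P\<close> to \<open>(b, a\<^sub>1, \<dots>, a\<^sub>r)\<close> in \<open>R\<close>: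
  then \<open>b \<notin> P\<close>, and the lifted data is admissible for \<open>\<nu>\<close> since elements of \<open>P\<close> have value
  above \<open>\<Delta> \<ni> \<nu> b\<close>. Every element of \<open>R1\<close> is a fraction \<open>x/s\<close> with \<open>x, s \<in> R\<close> and \<open>s \<notin> P\<close>,
  and it lies in \<open>P1\<close> exactly when \<open>x \<in> P\<close>, because shifting a value by an element of \<open>\<Delta>\<close>
  does not affect membership in the centre of \<open>\<nu>\<^sub>1\<close>. Hence \<open>R \<rightarrow> R1\<^sub>P\<^sub>1\<close> satisfies the universal
  characterisation of \<open>R\<^sub>P\<close>. Reduction modulo \<open>P\<close> maps \<open>R\<^sub>b\<close>, the algebra \<open>R'\<close> and its
  multiplicative set of elements of value zero onto the corresponding objects for \<open>R/P\<close>; this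
  yields a surjection from \<open>R1\<close> onto the blowing up of \<open>R/P\<close>, with kernel \<open>P1\<close>.\<close>

lemma (in cring) Units_mult_eq_zeroD:
  "\<lbrakk>u \<in> Units R; x \<in> carrier R; u \<otimes> x = \<zero>\<rbrakk> \<Longrightarrow> x = \<zero>"
  by (metis Units_closed Units_l_cancel r_null zero_closed)

lemma (in cring) eq_mult_inv_iff:
  "\<lbrakk>s \<in> Units R; a \<in> carrier R; x \<in> carrier R\<rbrakk> \<Longrightarrow> x = a \<otimes> inv s \<longleftrightarrow> x \<otimes> s = a"
  by (metis Units_closed Units_inv_closed Units_l_inv Units_r_inv m_assoc r_one)

lemma ring_hom_restrict_codomain:
  "h \<in> ring_hom A C \<Longrightarrow> h ` carrier A \<subseteq> H \<Longrightarrow> h \<in> ring_hom A (C\<lparr>carrier := H\<rparr>)"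
  unfolding ring_hom_def by auto

lemma ring_hom_restrict_domain:
  "h \<in> ring_hom A C \<Longrightarrow> H \<subseteq> carrier A \<Longrightarrow> h \<in> ring_hom (A\<lparr>carrier := H\<rparr>) C"
  unfolding ring_hom_def by (auto simp: subset_iff)

section \<open>Localization at a multiplicative set\<close>

locale localization = cring R for R (structure) + fixes S
  assumes S_subset: "S \<subseteq> carrier R" and one_mem_S: "\<one> \<in> S"
    and mult_mem_S: "\<lbrakk>s \<in> S; t \<in> S\<rbrakk> \<Longrightarrow> s \<otimes> t \<in> S"
begin

abbreviation L where "L \<equiv> loc R S"

lemma S_carrier: "s \<in> S \<Longrightarrow> s \<in> carrier R"
  using S_subset by auto

lemma loc_rel_iff:
  "((a, s), (c, t)) \<in> loc_rel R S \<longleftrightarrow> a \<in> carrier R \<and> c \<in> carrier R \<and> s \<in> S \<and> t \<in> S \<and>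
     (\<exists>u\<in>S. u \<otimes> (a \<otimes> t \<ominus> c \<otimes> s) = \<zero>)"
  unfolding loc_rel_def by auto

lemma equiv_loc_rel: "equiv (carrier R \<times> S) (loc_rel R S)"
proof (rule equivI)
  show "loc_rel R S \<subseteq> (carrier R \<times> S) \<times> (carrier R \<times> S)"
    unfolding loc_rel_def by auto
  show "refl_on (carrier R \<times> S) (loc_rel R S)"
  proof (rule refl_onI)
    fix x assume "x \<in> carrier R \<times> S"
    then obtain a s where x: "x = (a, s)" "a \<in> carrier R" "s \<in> S" by auto
    then have "\<one> \<otimes> (a \<otimes> s \<ominus> a \<otimes> s) = \<zero>" by (simp add: r_neg minus_eq S_carrier)
    then show "(x, x) \<in> loc_rel R S" unfolding x(1) loc_rel_iff using x one_mem_S by blast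
  qed
  show "sym (loc_rel R S)"
  proof (rule symI)
    fix x y assume "(x, y) \<in> loc_rel R S"
    then obtain a s c t u where xy: "x = (a, s)" "y = (c, t)" "a \<in> carrier R" "c \<in> carrier R"
      "s \<in> S" "t \<in> S" "u \<in> S" "u \<otimes> (a \<otimes> t \<ominus> c \<otimes> s) = \<zero>"
      by (cases x, cases y) (auto simp: loc_rel_iff)
    have "u \<otimes> (c \<otimes> s \<ominus> a \<otimes> t) = \<ominus> (u \<otimes> (a \<otimes> t \<ominus> c \<otimes> s))"
      using xy(3,4) S_carrier[OF xy(5)] S_carrier[OF xy(6)] S_carrier[OF xy(7)] by algebra
    with xy(8) have "u \<otimes> (c \<otimes> s \<ominus> a \<otimes> t) = \<zero>" by simp
    then show "(y, x) \<in> loc_rel R S" unfolding xy(1,2) loc_rel_iff using xy(3-7) by blast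
  qed
  show "trans (loc_rel R S)"
  proof (rule transI)
    fix x y z assume "(x, y) \<in> loc_rel R S" "(y, z) \<in> loc_rel R S"
    then obtain a s c t e r u v where xyz: "x = (a, s)" "y = (c, t)" "z = (e, r)"
      "a \<in> carrier R" "c \<in> carrier R" "e \<in> carrier R" "s \<in> S" "t \<in> S" "r \<in> S"
      "u \<in> S" "u \<otimes> (a \<otimes> t \<ominus> c \<otimes> s) = \<zero>" "v \<in> S" "v \<otimes> (c \<otimes> r \<ominus> e \<otimes> t) = \<zero>"
      by (cases x, cases y, cases z) (auto simp: loc_rel_iff)
    have "(u \<otimes> v \<otimes> t) \<otimes> (a \<otimes> r \<ominus> e \<otimes> s) =
        (v \<otimes> r) \<otimes> (u \<otimes> (a \<otimes> t \<ominus> c \<otimes> s)) \<oplus> (u \<otimes> s) \<otimes> (v \<otimes> (c \<otimes> r \<ominus> e \<otimes> t))"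
      using xyz(4-6) S_carrier[OF xyz(7)] S_carrier[OF xyz(8)] S_carrier[OF xyz(9)]
        S_carrier[OF xyz(10)] S_carrier[OF xyz(12)] by algebra
    with xyz have "(u \<otimes> v \<otimes> t) \<otimes> (a \<otimes> r \<ominus> e \<otimes> s) = \<zero>" by (simp add: S_carrier)
    moreover have "u \<otimes> v \<otimes> t \<in> S" using xyz mult_mem_S by auto
    ultimately show "(x, z) \<in> loc_rel R S" using xyz by (auto simp: loc_rel_iff)
  qed
qed

lemma frac_eq_iff:
  "\<lbrakk>a \<in> carrier R; c \<in> carrier R; s \<in> S; t \<in> S\<rbrakk> \<Longrightarrow>
     frac R S a s = frac R S c t \<longleftrightarrow> (\<exists>u\<in>S. u \<otimes> (a \<otimes> t \<ominus> c \<otimes> s) = \<zero>)"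
  unfolding frac_def using equiv_class_eq_iff[OF equiv_loc_rel, of "(a, s)" "(c, t)"]
  by (auto simp: loc_rel_iff)

lemma frac_eqI:
  "\<lbrakk>a \<in> carrier R; c \<in> carrier R; s \<in> S; t \<in> S; a \<otimes> t = c \<otimes> s\<rbrakk> \<Longrightarrow> frac R S a s = frac R S c t"
  by (subst frac_eq_iff) (auto intro!: bexI[of _ "\<one>"] simp: one_mem_S r_neg minus_eq S_carrier)

lemma frac_closed [simp]: "\<lbrakk>a \<in> carrier R; s \<in> S\<rbrakk> \<Longrightarrow> frac R S a s \<in> carrier L"
  unfolding frac_def loc_def by (auto intro: quotientI)

lemma loc_carrierE:
  assumes "U \<in> carrier L"
  obtains a s where "a \<in> carrier R" "s \<in> S" "U = frac R S a s"
  using assms unfolding loc_def frac_def by (auto elim!: quotientE)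

lemma pick_frac:
  assumes "a \<in> carrier R" "s \<in> S"
  obtains a' s' where "pick (frac R S a s) = (a', s')" "a' \<in> carrier R" "s' \<in> S"
    "frac R S a' s' = frac R S a s"
proof -
  have "(a, s) \<in> frac R S a s"
    unfolding frac_def using equiv_class_self[OF equiv_loc_rel] assms by auto
  then have "pick (frac R S a s) \<in> frac R S a s"
    unfolding pick_def by (rule someI)
  moreover obtain a' s' where "pick (frac R S a s) = (a', s')" by fastforce
  ultimately have p: "pick (frac R S a s) = (a', s')" "((a, s), (a', s')) \<in> loc_rel R S"
    unfolding frac_def by auto
  then have "frac R S a' s' = frac R S a s"
    unfolding frac_def using equiv_class_eq_iff[OF equiv_loc_rel] by blast
  with p show ?thesis using that by (auto simp: loc_rel_iff)
qed

text \<open>The operations of \<open>loc\<close> act on arbitrary representatives chosen by \<open>pick\<close>;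
  the two congruence lemmas show that the result does not depend on that choice.\<close>

lemma frac_mult_cong:
  assumes "a \<in> carrier R" "a' \<in> carrier R" "c \<in> carrier R" "c' \<in> carrier R"
    "s \<in> S" "s' \<in> S" "t \<in> S" "t' \<in> S"
    "frac R S a' s' = frac R S a s" "frac R S c' t' = frac R S c t"
  shows "frac R S (a' \<otimes> c') (s' \<otimes> t') = frac R S (a \<otimes> c) (s \<otimes> t)"
proof -
  obtain u v where uv: "u \<in> S" "u \<otimes> (a' \<otimes> s \<ominus> a \<otimes> s') = \<zero>"
    "v \<in> S" "v \<otimes> (c' \<otimes> t \<ominus> c \<otimes> t') = \<zero>"
    using assms frac_eq_iff by meson
  have "(u \<otimes> v) \<otimes> ((a' \<otimes> c') \<otimes> (s \<otimes> t) \<ominus> (a \<otimes> c) \<otimes> (s' \<otimes> t')) =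
      (v \<otimes> c' \<otimes> t) \<otimes> (u \<otimes> (a' \<otimes> s \<ominus> a \<otimes> s')) \<oplus> (u \<otimes> a \<otimes> s') \<otimes> (v \<otimes> (c' \<otimes> t \<ominus> c \<otimes> t'))"
    using assms(1-4) S_carrier[OF assms(5)] S_carrier[OF assms(6)] S_carrier[OF assms(7)]
      S_carrier[OF assms(8)] S_carrier[OF uv(1)] S_carrier[OF uv(3)] by algebra
  also have "\<dots> = \<zero>" using uv assms by (simp add: S_carrier)
  finally show ?thesis
    using assms uv mult_mem_S frac_eq_iff by (meson m_closed S_carrier add.m_closed)
qed

lemma frac_add_cong:
  assumes "a \<in> carrier R" "a' \<in> carrier R" "c \<in> carrier R" "c' \<in> carrier R"
    "s \<in> S" "s' \<in> S" "t \<in> S" "t' \<in> S"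
    "frac R S a' s' = frac R S a s" "frac R S c' t' = frac R S c t"
  shows "frac R S (a' \<otimes> t' \<oplus> c' \<otimes> s') (s' \<otimes> t') = frac R S (a \<otimes> t \<oplus> c \<otimes> s) (s \<otimes> t)"
proof -
  obtain u v where uv: "u \<in> S" "u \<otimes> (a' \<otimes> s \<ominus> a \<otimes> s') = \<zero>"
    "v \<in> S" "v \<otimes> (c' \<otimes> t \<ominus> c \<otimes> t') = \<zero>"
    using assms frac_eq_iff by meson
  have "(u \<otimes> v) \<otimes> ((a' \<otimes> t' \<oplus> c' \<otimes> s') \<otimes> (s \<otimes> t) \<ominus> (a \<otimes> t \<oplus> c \<otimes> s) \<otimes> (s' \<otimes> t')) =
      (v \<otimes> t \<otimes> t') \<otimes> (u \<otimes> (a' \<otimes> s \<ominus> a \<otimes> s')) \<oplus> (u \<otimes> s \<otimes> s') \<otimes> (v \<otimes> (c' \<otimes> t \<ominus> c \<otimes> t'))"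
    using assms(1-4) S_carrier[OF assms(5)] S_carrier[OF assms(6)] S_carrier[OF assms(7)]
      S_carrier[OF assms(8)] S_carrier[OF uv(1)] S_carrier[OF uv(3)] by algebra
  also have "\<dots> = \<zero>" using uv assms by (simp add: S_carrier)
  finally show ?thesis
    using assms uv mult_mem_S frac_eq_iff by (meson m_closed S_carrier add.m_closed)
qed

lemma mult_frac:
  "\<lbrakk>a \<in> carrier R; c \<in> carrier R; s \<in> S; t \<in> S\<rbrakk> \<Longrightarrow>
     frac R S a s \<otimes>\<^bsub>L\<^esub> frac R S c t = frac R S (a \<otimes> c) (s \<otimes> t)"
  by (rule pick_frac[of a s], assumption+, rule pick_frac[of c t], assumption+)
    (simp add: loc_def, rule frac_mult_cong, auto)

lemma add_frac:
  "\<lbrakk>a \<in> carrier R; c \<in> carrier R; s \<in> S; t \<in> S\<rbrakk> \<Longrightarrow>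
     frac R S a s \<oplus>\<^bsub>L\<^esub> frac R S c t = frac R S (a \<otimes> t \<oplus> c \<otimes> s) (s \<otimes> t)"
  by (rule pick_frac[of a s], assumption+, rule pick_frac[of c t], assumption+)
    (simp add: loc_def, rule frac_add_cong, auto)

lemma one_loc: "\<one>\<^bsub>L\<^esub> = frac R S \<one> \<one>"
  by (simp add: loc_def)

lemma zero_loc: "\<zero>\<^bsub>L\<^esub> = frac R S \<zero> \<one>"
  by (simp add: loc_def)

lemmas frac_simps = mult_frac add_frac mult_mem_S

lemma loc_cases:
  "U \<in> carrier L \<Longrightarrow> (\<And>a s. a \<in> carrier R \<Longrightarrow> s \<in> S \<Longrightarrow> s \<in> carrier R \<Longrightarrow> P (frac R S a s)) \<Longrightarrow> P U"
  by (erule loc_carrierE) (auto simp: S_carrier)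

lemma loc_cases2:
  "U \<in> carrier L \<Longrightarrow> V \<in> carrier L \<Longrightarrow>
   (\<And>a s c t. a \<in> carrier R \<Longrightarrow> s \<in> S \<Longrightarrow> c \<in> carrier R \<Longrightarrow> t \<in> S \<Longrightarrow>
      s \<in> carrier R \<Longrightarrow> t \<in> carrier R \<Longrightarrow> P (frac R S a s) (frac R S c t)) \<Longrightarrow> P U V"
  by (erule loc_carrierE, erule loc_carrierE) (auto simp: S_carrier)

lemma loc_cases3:
  "U \<in> carrier L \<Longrightarrow> V \<in> carrier L \<Longrightarrow> W \<in> carrier L \<Longrightarrow>
   (\<And>a s c t e r. a \<in> carrier R \<Longrightarrow> s \<in> S \<Longrightarrow> c \<in> carrier R \<Longrightarrow> t \<in> S \<Longrightarrow> e \<in> carrier R \<Longrightarrow>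
      r \<in> S \<Longrightarrow> s \<in> carrier R \<Longrightarrow> t \<in> carrier R \<Longrightarrow> r \<in> carrier R \<Longrightarrow>
      P (frac R S a s) (frac R S c t) (frac R S e r)) \<Longrightarrow> P U V W"
  by (erule loc_carrierE, erule loc_carrierE, erule loc_carrierE) (auto simp: S_carrier)

lemma cring_loc: "cring L"
proof (rule cringI)
  show "abelian_group L"
  proof (rule abelian_groupI)
    fix x y z assume x: "x \<in> carrier L" and y: "y \<in> carrier L" and z: "z \<in> carrier L"
    show "x \<oplus>\<^bsub>L\<^esub> y \<in> carrier L"
      using x y by (rule loc_cases2) (simp add: frac_simps)
    show "x \<oplus>\<^bsub>L\<^esub> y \<oplus>\<^bsub>L\<^esub> z = x \<oplus>\<^bsub>L\<^esub> (y \<oplus>\<^bsub>L\<^esub> z)"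
      using x y z by (rule loc_cases3) (simp add: frac_simps, rule frac_eqI, simp_all add: frac_simps, algebra)
    show "x \<oplus>\<^bsub>L\<^esub> y = y \<oplus>\<^bsub>L\<^esub> x"
      using x y by (rule loc_cases2) (simp add: frac_simps, rule frac_eqI, simp_all add: frac_simps, algebra)
    show "\<zero>\<^bsub>L\<^esub> \<oplus>\<^bsub>L\<^esub> x = x"
      using x by (rule loc_cases) (simp add: frac_simps zero_loc one_mem_S)
    show "\<exists>y\<in>carrier L. y \<oplus>\<^bsub>L\<^esub> x = \<zero>\<^bsub>L\<^esub>"
      using x
    proof (rule loc_cases)
      fix a s assume as: "a \<in> carrier R" "s \<in> S" "s \<in> carrier R"
      have "frac R S (\<ominus> a) s \<oplus>\<^bsub>L\<^esub> frac R S a s = \<zero>\<^bsub>L\<^esub>"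
        by (insert as) (simp add: frac_simps zero_loc one_mem_S, rule frac_eqI, simp_all add: frac_simps one_mem_S, algebra)
      then show "\<exists>y\<in>carrier L. y \<oplus>\<^bsub>L\<^esub> frac R S a s = \<zero>\<^bsub>L\<^esub>"
        using as by (intro bexI[of _ "frac R S (\<ominus> a) s"]) auto
    qed
  qed (simp add: zero_loc one_mem_S)
  show "comm_monoid L"
  proof (rule comm_monoidI)
    fix x y z assume x: "x \<in> carrier L" and y: "y \<in> carrier L" and z: "z \<in> carrier L"
    show "x \<otimes>\<^bsub>L\<^esub> y \<in> carrier L"
      using x y by (rule loc_cases2) (simp add: frac_simps)
    show "x \<otimes>\<^bsub>L\<^esub> y \<otimes>\<^bsub>L\<^esub> z = x \<otimes>\<^bsub>L\<^esub> (y \<otimes>\<^bsub>L\<^esub> z)"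
      using x y z by (rule loc_cases3) (simp add: frac_simps, rule frac_eqI, simp_all add: frac_simps, algebra)
    show "x \<otimes>\<^bsub>L\<^esub> y = y \<otimes>\<^bsub>L\<^esub> x"
      using x y by (rule loc_cases2) (simp add: frac_simps, rule frac_eqI, simp_all add: frac_simps, algebra)
    show "\<one>\<^bsub>L\<^esub> \<otimes>\<^bsub>L\<^esub> x = x"
      using x by (rule loc_cases) (simp add: frac_simps one_loc one_mem_S)
  qed (simp add: one_loc one_mem_S)
  fix x y z assume x: "x \<in> carrier L" and y: "y \<in> carrier L" and z: "z \<in> carrier L"
  show "(x \<oplus>\<^bsub>L\<^esub> y) \<otimes>\<^bsub>L\<^esub> z = x \<otimes>\<^bsub>L\<^esub> z \<oplus>\<^bsub>L\<^esub> y \<otimes>\<^bsub>L\<^esub> z"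
    using x y z by (rule loc_cases3) (simp add: frac_simps, rule frac_eqI, simp_all add: frac_simps, algebra)
qed

lemma frac_one_hom: "(\<lambda>a. frac R S a \<one>) \<in> ring_hom R L"
  by (rule ring_hom_memI) (simp_all add: frac_simps one_mem_S one_loc)

lemma frac_mult_denom:
  "\<lbrakk>a \<in> carrier R; s \<in> S\<rbrakk> \<Longrightarrow> frac R S a s \<otimes>\<^bsub>L\<^esub> frac R S s \<one> = frac R S a \<one>"
  by (simp add: frac_simps one_mem_S S_carrier)
    (rule frac_eqI, auto simp: one_mem_S S_carrier m_comm mult_mem_S m_assoc)

lemma frac_one_Units: "s \<in> S \<Longrightarrow> frac R S s \<one> \<in> Units L"
proof -
  assume s: "s \<in> S"
  have "frac R S \<one> s \<otimes>\<^bsub>L\<^esub> frac R S s \<one> = \<one>\<^bsub>L\<^esub>"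
    using s frac_mult_denom[of "\<one>" s] by (simp add: one_loc)
  moreover have "frac R S s \<one> \<otimes>\<^bsub>L\<^esub> frac R S \<one> s = \<one>\<^bsub>L\<^esub>"
    using s by (simp add: frac_simps one_mem_S one_loc S_carrier)
      (rule frac_eqI, auto simp: one_mem_S S_carrier mult_mem_S m_comm)
  ultimately show ?thesis using s unfolding Units_def by (auto simp: one_mem_S S_carrier)
qed

lemma frac_one_eq_zeroD: "\<lbrakk>a \<in> carrier R; frac R S a \<one> = \<zero>\<^bsub>L\<^esub>\<rbrakk> \<Longrightarrow> \<exists>u\<in>S. u \<otimes> a = \<zero>"
  unfolding zero_loc by (subst (asm) frac_eq_iff) (auto simp: one_mem_S minus_eq S_carrier)

lemma frac_eq_mult_inv:
  "\<lbrakk>a \<in> carrier R; s \<in> S\<rbrakk> \<Longrightarrow> frac R S a s = frac R S a \<one> \<otimes>\<^bsub>L\<^esub> inv\<^bsub>L\<^esub> (frac R S s \<one>)"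
proof -
  assume as: "a \<in> carrier R" "s \<in> S"
  interpret L: cring L by (rule cring_loc)
  show ?thesis
    using L.eq_mult_inv_iff[OF frac_one_Units[OF as(2)], of "frac R S a \<one>" "frac R S a s"]
      frac_mult_denom[OF as] as one_mem_S by simp
qed

end

definition is_localization :: "('a, 'm) ring_scheme \<Rightarrow> 'a set \<Rightarrow> ('c, 'n) ring_scheme \<Rightarrow> ('a \<Rightarrow> 'c) \<Rightarrow> bool" where
  "is_localization A S C f \<longleftrightarrow> f \<in> ring_hom A C \<and> (\<forall>s\<in>S. f s \<in> Units C) \<and>
     (\<forall>y\<in>carrier C. \<exists>x\<in>carrier A. \<exists>s\<in>S. y \<otimes>\<^bsub>C\<^esub> f s = f x) \<and>
     (\<forall>x\<in>carrier A. f x = \<zero>\<^bsub>C\<^esub> \<longrightarrow> (\<exists>s\<in>S. s \<otimes>\<^bsub>A\<^esub> x = \<zero>\<^bsub>A\<^esub>))"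

lemma (in localization) is_localization_loc: "is_localization R S L (\<lambda>a. frac R S a \<one>)"
  unfolding is_localization_def
proof (intro conjI ballI impI)
  fix y assume "y \<in> carrier L"
  then show "\<exists>x\<in>carrier R. \<exists>s\<in>S. y \<otimes>\<^bsub>L\<^esub> frac R S s \<one> = frac R S x \<one>"
    by (rule loc_cases) (auto intro!: frac_mult_denom)
qed (auto intro: frac_one_hom frac_one_Units frac_one_eq_zeroD)

locale localization_lift = localization R S + C: cring C for R (structure) and S and C (structure) +
  fixes f
  assumes f_hom: "f \<in> ring_hom R C" and f_Units: "\<And>s. s \<in> S \<Longrightarrow> f s \<in> Units C"
begin

sublocale f: ring_hom_cring R C f
  by unfold_locales (rule f_hom)

definition lift where "lift U = f (fst (pick U)) \<otimes>\<^bsub>C\<^esub> inv\<^bsub>C\<^esub> f (snd (pick U))"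

lemma f_closed [simp]: "x \<in> carrier R \<Longrightarrow> f x \<in> carrier C"
  by (rule f.hom_closed)

lemma lift_frac:
  assumes "a \<in> carrier R" "s \<in> S"
  shows "lift (frac R S a s) = f a \<otimes>\<^bsub>C\<^esub> inv\<^bsub>C\<^esub> f s"
proof -
  obtain a' s' where p: "pick (frac R S a s) = (a', s')" "a' \<in> carrier R" "s' \<in> S"
    "frac R S a' s' = frac R S a s"
    using pick_frac[OF assms] by blast
  then obtain u where u: "u \<in> S" "u \<otimes> (a' \<otimes> s \<ominus> a \<otimes> s') = \<zero>"
    using frac_eq_iff assms by meson
  have "f u \<otimes>\<^bsub>C\<^esub> (f a' \<otimes>\<^bsub>C\<^esub> f s \<ominus>\<^bsub>C\<^esub> f a \<otimes>\<^bsub>C\<^esub> f s') = f (u \<otimes> (a' \<otimes> s \<ominus> a \<otimes> s'))"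
    using u(1) p(2,3) assms by (simp add: S_carrier)
  also have "\<dots> = \<zero>\<^bsub>C\<^esub>" by (simp add: u(2))
  finally have "f a' \<otimes>\<^bsub>C\<^esub> f s \<ominus>\<^bsub>C\<^esub> f a \<otimes>\<^bsub>C\<^esub> f s' = \<zero>\<^bsub>C\<^esub>"
    by (rule C.Units_mult_eq_zeroD[OF f_Units[OF u(1)], rotated]) (use p assms in \<open>simp add: S_carrier\<close>)
  then have e: "f a' \<otimes>\<^bsub>C\<^esub> f s = f a \<otimes>\<^bsub>C\<^esub> f s'"
    using C.r_right_minus_eq p assms by (simp add: S_carrier)
  have us: "f s \<in> Units C" "f s' \<in> Units C" using f_Units p assms by auto
  have "(f a' \<otimes>\<^bsub>C\<^esub> inv\<^bsub>C\<^esub> f s') \<otimes>\<^bsub>C\<^esub> f s = (f a' \<otimes>\<^bsub>C\<^esub> f s) \<otimes>\<^bsub>C\<^esub> inv\<^bsub>C\<^esub> f s'"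
    using us p assms by (simp add: C.m_ac S_carrier)
  also have "\<dots> = f a" using e us p assms C.eq_mult_inv_iff[of "f s'" "f a" "f a"]
    by (simp add: C.m_assoc S_carrier)
  finally have "f a' \<otimes>\<^bsub>C\<^esub> inv\<^bsub>C\<^esub> f s' = f a \<otimes>\<^bsub>C\<^esub> inv\<^bsub>C\<^esub> f s"
    using C.eq_mult_inv_iff us p assms by (simp add: S_carrier)
  then show ?thesis unfolding lift_def using p by simp
qed

lemma lift_frac_one: "a \<in> carrier R \<Longrightarrow> lift (frac R S a \<one>) = f a"
  by (simp add: lift_frac one_mem_S)

lemma lift_mult:
  assumes "x \<in> carrier L" "y \<in> carrier L"
  shows "lift (x \<otimes>\<^bsub>L\<^esub> y) = lift x \<otimes>\<^bsub>C\<^esub> lift y"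
  using assms
proof (rule loc_cases2)
  fix a s c t assume h: "a \<in> carrier R" "s \<in> S" "c \<in> carrier R" "t \<in> S" "s \<in> carrier R" "t \<in> carrier R"
  have us: "f s \<in> Units C" "f t \<in> Units C" using f_Units h by auto
  have "f a \<otimes>\<^bsub>C\<^esub> inv\<^bsub>C\<^esub> f s \<otimes>\<^bsub>C\<^esub> (f c \<otimes>\<^bsub>C\<^esub> inv\<^bsub>C\<^esub> f t) \<otimes>\<^bsub>C\<^esub> (f s \<otimes>\<^bsub>C\<^esub> f t) =
      (f a \<otimes>\<^bsub>C\<^esub> (inv\<^bsub>C\<^esub> f s \<otimes>\<^bsub>C\<^esub> f s)) \<otimes>\<^bsub>C\<^esub> (f c \<otimes>\<^bsub>C\<^esub> (inv\<^bsub>C\<^esub> f t \<otimes>\<^bsub>C\<^esub> f t))"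
    using h us by (simp add: C.m_ac)
  also have "\<dots> = f (a \<otimes> c)" using h us by simp
  finally have "lift (frac R S a s) \<otimes>\<^bsub>C\<^esub> lift (frac R S c t) = f (a \<otimes> c) \<otimes>\<^bsub>C\<^esub> inv\<^bsub>C\<^esub> f (s \<otimes> t)"
    using h us by (simp add: lift_frac C.eq_mult_inv_iff)
  then show "lift (frac R S a s \<otimes>\<^bsub>L\<^esub> frac R S c t) = lift (frac R S a s) \<otimes>\<^bsub>C\<^esub> lift (frac R S c t)"
    using h by (simp add: frac_simps lift_frac)
qed

lemma lift_add:
  assumes "x \<in> carrier L" "y \<in> carrier L"
  shows "lift (x \<oplus>\<^bsub>L\<^esub> y) = lift x \<oplus>\<^bsub>C\<^esub> lift y"
  using assms
proof (rule loc_cases2)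
  fix a s c t assume h: "a \<in> carrier R" "s \<in> S" "c \<in> carrier R" "t \<in> S" "s \<in> carrier R" "t \<in> carrier R"
  have us: "f s \<in> Units C" "f t \<in> Units C" using f_Units h by auto
  then have c: "f s \<in> carrier C" "f t \<in> carrier C" "f a \<in> carrier C" "f c \<in> carrier C"
    "inv\<^bsub>C\<^esub> f s \<in> carrier C" "inv\<^bsub>C\<^esub> f t \<in> carrier C" using h by auto
  have "(f a \<otimes>\<^bsub>C\<^esub> inv\<^bsub>C\<^esub> f s \<oplus>\<^bsub>C\<^esub> f c \<otimes>\<^bsub>C\<^esub> inv\<^bsub>C\<^esub> f t) \<otimes>\<^bsub>C\<^esub> (f s \<otimes>\<^bsub>C\<^esub> f t) =
      f t \<otimes>\<^bsub>C\<^esub> f a \<otimes>\<^bsub>C\<^esub> (f s \<otimes>\<^bsub>C\<^esub> inv\<^bsub>C\<^esub> f s) \<oplus>\<^bsub>C\<^esub> f s \<otimes>\<^bsub>C\<^esub> f c \<otimes>\<^bsub>C\<^esub> (f t \<otimes>\<^bsub>C\<^esub> inv\<^bsub>C\<^esub> f t)"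
    using c by algebra
  also have "\<dots> = f (a \<otimes> t \<oplus> c \<otimes> s)" using h c us by (simp add: C.m_comm)
  finally have "lift (frac R S a s) \<oplus>\<^bsub>C\<^esub> lift (frac R S c t) = f (a \<otimes> t \<oplus> c \<otimes> s) \<otimes>\<^bsub>C\<^esub> inv\<^bsub>C\<^esub> f (s \<otimes> t)"
    using h us by (simp add: lift_frac C.eq_mult_inv_iff)
  then show "lift (frac R S a s \<oplus>\<^bsub>L\<^esub> frac R S c t) = lift (frac R S a s) \<oplus>\<^bsub>C\<^esub> lift (frac R S c t)"
    using h by (simp add: frac_simps lift_frac)
qed

lemma lift_hom: "lift \<in> ring_hom L C"
proof (rule ring_hom_memI)
  fix x assume "x \<in> carrier L"
  then show "lift x \<in> carrier C" by (rule loc_cases) (simp add: lift_frac f_Units)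
qed (simp_all add: lift_mult lift_add one_loc lift_frac_one)

end

text \<open>The isomorphism is the lift of \<open>f\<close>.\<close>

lemma (in localization) is_localization_iso:
  assumes "cring C" "is_localization R S C f"
  shows "L \<simeq> C"
proof -
  interpret U: localization_lift R S C f
    using localization_axioms assms unfolding is_localization_def localization_lift_def
      localization_lift_axioms_def by blast
  have "inj_on U.lift (carrier L)"
  proof (rule inj_onI)
    fix x y assume xy: "x \<in> carrier L" "y \<in> carrier L" "U.lift x = U.lift y"
    obtain a s where as: "a \<in> carrier R" "s \<in> S" "x = frac R S a s" using xy(1) by (rule loc_carrierE)
    obtain c t where ct: "c \<in> carrier R" "t \<in> S" "y = frac R S c t" using xy(2) by (rule loc_carrierE)
    have us: "f s \<in> Units C" "f t \<in> Units C" using U.f_Units as ct by auto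
    define q where "q = f c \<otimes>\<^bsub>C\<^esub> inv\<^bsub>C\<^esub> f t"
    have q_closed: "q \<in> carrier C" using us ct by (simp add: q_def)
    have q_t: "q \<otimes>\<^bsub>C\<^esub> f t = f c"
      by (rule iffD1[OF U.C.eq_mult_inv_iff[OF us(2) U.f_closed[OF ct(1)] q_closed] q_def])
    have "q = f a \<otimes>\<^bsub>C\<^esub> inv\<^bsub>C\<^esub> f s"
      using xy(3) as ct by (simp add: q_def U.lift_frac)
    then have q_s: "q \<otimes>\<^bsub>C\<^esub> f s = f a"
      by (rule iffD1[OF U.C.eq_mult_inv_iff[OF us(1) U.f_closed[OF as(1)] q_closed]])
    have fs_ft: "f s \<in> carrier C" "f t \<in> carrier C"
      using as(2) ct(2) S_carrier by auto
    have "f a \<otimes>\<^bsub>C\<^esub> f t = (q \<otimes>\<^bsub>C\<^esub> f s) \<otimes>\<^bsub>C\<^esub> f t" by (simp only: q_s)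
    also have "\<dots> = (q \<otimes>\<^bsub>C\<^esub> f t) \<otimes>\<^bsub>C\<^esub> f s" using q_closed fs_ft by algebra
    also have "\<dots> = f c \<otimes>\<^bsub>C\<^esub> f s" by (simp only: q_t)
    finally have "f (a \<otimes> t \<ominus> c \<otimes> s) = \<zero>\<^bsub>C\<^esub>"
      using as ct fs_ft by (simp add: S_carrier)
    moreover have "a \<otimes> t \<ominus> c \<otimes> s \<in> carrier R"
      using as ct by (simp add: S_carrier)
    ultimately obtain u where "u \<in> S" "u \<otimes> (a \<otimes> t \<ominus> c \<otimes> s) = \<zero>"
      using assms(2) unfolding is_localization_def by blast
    then show "x = y" using frac_eq_iff as ct by blast
  qed
  moreover have "U.lift ` carrier L = carrier C"
  proof
    show "U.lift ` carrier L \<subseteq> carrier C" using ring_hom_closed[OF U.lift_hom] by auto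
  next
    show "carrier C \<subseteq> U.lift ` carrier L"
    proof
      fix y assume y: "y \<in> carrier C"
      then obtain x s where xs: "x \<in> carrier R" "s \<in> S" "y \<otimes>\<^bsub>C\<^esub> f s = f x"
        using assms(2) unfolding is_localization_def by blast
      then have "y = U.lift (frac R S x s)"
        using U.C.eq_mult_inv_iff[OF U.f_Units[OF xs(2)] _ y] by (simp add: U.lift_frac)
      then show "y \<in> U.lift ` carrier L" using xs by auto
    qed
  qed
  ultimately show ?thesis
    unfolding is_ring_iso_def ring_iso_def using U.lift_hom bij_betw_imageI by blast
qed

section \<open>Prevaluations\<close>

lemma vadd_None [simp]: "vadd x None = None" "vadd None x = None"
  by (cases x; simp)+

lemma vle_refl [simp]: "vle x x"
  by (cases x) auto

lemma vmin_None [simp]: "vmin x None = x" "vmin None x = x"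
  by (cases x; simp add: vmin_def)+

lemma vle_antisym: "vle x y \<Longrightarrow> vle y x \<Longrightarrow> x = y"
  by (cases x; cases y) auto

lemma vle_trans: "vle x y \<Longrightarrow> vle y z \<Longrightarrow> vle x z"
  by (cases x; cases y; cases z) auto

lemma vlt_vle_trans: "vlt x y \<Longrightarrow> vle y z \<Longrightarrow> vlt x z"
  unfolding vlt_def by (cases x; cases y; cases z) auto

lemma vlt_vmin: "vlt a x \<Longrightarrow> vlt a y \<Longrightarrow> vlt a (vmin x y)"
  unfolding vmin_def by auto

lemma vlt_vadd_nonneg:
  assumes "vlt (Some d) x" "vle (Some 0) y"
  shows "vlt (Some d) (vadd x y)"
proof (cases x; cases y)
  fix g h assume "x = Some g" "y = Some h"
  with assms have "d < g" "0 \<le> h" by (auto simp: vlt_def)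
  then have "d < g + h" using add_strict_increasing2[of h d g] by (simp add: add.commute)
  then show ?thesis using \<open>x = Some g\<close> \<open>y = Some h\<close> by (auto simp: vlt_def)
qed (auto simp: vlt_def)

lemma vadd_comm: "vadd x y = vadd y x"
  by (cases x; cases y) (auto simp: add.commute)

lemma vadd_eq_right_iff: "vadd x (Some g) = Some g \<longleftrightarrow> x = Some 0"
  by (cases x) auto

lemma vadd_cancel: "vadd x (Some p) = vadd y (Some q) \<Longrightarrow> vsub x (Some q) = vsub y (Some p)"
  by (cases x; cases y) (auto simp: algebra_simps)

lemma vsub_vadd: "vsub (vadd a c) (vadd (Some s) (Some t)) = vadd (vsub a (Some s)) (vsub c (Some t))"
  by (cases a; cases c) (auto simp: algebra_simps)

lemma vsub_vmin:
  "vle (vmin (vadd a (Some t)) (vadd c (Some s))) x \<Longrightarrow>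
   vle (vmin (vsub a (Some s)) (vsub c (Some t))) (vsub x (vadd (Some s) (Some t)))"
  by (cases a; cases c; cases x)
    (auto simp: vmin_def algebra_simps le_diff_eq diff_le_eq split: if_splits)

definition prevaluation :: "('a, 'b) ring_scheme \<Rightarrow> ('a \<Rightarrow> 'g::linordered_ab_group_add option) \<Rightarrow> bool" where
  "prevaluation R w \<longleftrightarrow>
     (\<forall>a\<in>carrier R. \<forall>b\<in>carrier R. w (a \<otimes>\<^bsub>R\<^esub> b) = vadd (w a) (w b)) \<and>
     (\<forall>a\<in>carrier R. \<forall>b\<in>carrier R. vle (vmin (w a) (w b)) (w (a \<oplus>\<^bsub>R\<^esub> b))) \<and>
     w \<one>\<^bsub>R\<^esub> = Some 0 \<and> w \<zero>\<^bsub>R\<^esub> = None"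

lemma valuation_imp_prevaluation: "valuation R \<nu> \<Longrightarrow> prevaluation R \<nu>"
  unfolding valuation_def prevaluation_def by blast

locale prevalued_cring = cring R for R (structure) + fixes w :: "'a \<Rightarrow> 'g::linordered_ab_group_add option"
  assumes prevaluation: "prevaluation R w"
begin

lemma val_mult: "a \<in> carrier R \<Longrightarrow> b \<in> carrier R \<Longrightarrow> w (a \<otimes> b) = vadd (w a) (w b)"
  using prevaluation unfolding prevaluation_def by auto

lemma val_add: "a \<in> carrier R \<Longrightarrow> b \<in> carrier R \<Longrightarrow> vle (vmin (w a) (w b)) (w (a \<oplus> b))"
  using prevaluation unfolding prevaluation_def by auto

lemma val_one [simp]: "w \<one> = Some 0"
  using prevaluation unfolding prevaluation_def by auto

lemma val_zero [simp]: "w \<zero> = None"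
  using prevaluation unfolding prevaluation_def by auto

lemma val_minus_one: "w (\<ominus> \<one>) = Some 0"
proof -
  have "vadd (w (\<ominus> \<one>)) (w (\<ominus> \<one>)) = Some 0"
    using val_mult[of "\<ominus> \<one>" "\<ominus> \<one>"] by (simp add: l_minus)
  then obtain g where g: "w (\<ominus> \<one>) = Some g" "g + g = 0"
    by (cases "w (\<ominus> \<one>)") auto
  then have "g = 0"
    by (metis add_neg_neg add_pos_pos less_irrefl neq_iff)
  with g show ?thesis by simp
qed

lemma val_uminus: "a \<in> carrier R \<Longrightarrow> w (\<ominus> a) = w a"
  using val_mult[of "\<ominus> \<one>" a] by (cases "w a") (simp_all add: l_minus val_minus_one)

lemma val_eq_if_diff_None:
  assumes "a \<in> carrier R" "b \<in> carrier R" "w (a \<ominus> b) = None"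
  shows "w a = w b"
proof (rule vle_antisym)
  have "a = b \<oplus> (a \<ominus> b)" using assms by algebra
  then show "vle (w b) (w a)" using val_add[of b "a \<ominus> b"] assms by simp
  have "b = a \<oplus> \<ominus> (a \<ominus> b)" using assms by algebra
  then show "vle (w a) (w b)" using val_add[of a "\<ominus> (a \<ominus> b)"] val_uminus[of "a \<ominus> b"] assms by simp
qed

lemma val_pow_finite: "a \<in> carrier R \<Longrightarrow> w a \<noteq> None \<Longrightarrow> w (a [^] (n::nat)) \<noteq> None"
  by (induct n) (auto simp: val_mult nat_pow_Suc2)

end

locale localized_prevaluation = localization R S + prevalued_cring R w
  for R (structure) and S and w +
  assumes val_S_finite: "s \<in> S \<Longrightarrow> w s \<noteq> None"
begin

lemma ext_val_frac:
  assumes "a \<in> carrier R" "s \<in> S"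
  shows "ext_val w (frac R S a s) = vsub (w a) (w s)"
proof -
  obtain a' s' where p: "pick (frac R S a s) = (a', s')" "a' \<in> carrier R" "s' \<in> S"
    "frac R S a' s' = frac R S a s"
    using pick_frac[OF assms] by blast
  then obtain u where u: "u \<in> S" "u \<otimes> (a' \<otimes> s \<ominus> a \<otimes> s') = \<zero>"
    using frac_eq_iff assms by meson
  have c: "u \<in> carrier R" "s \<in> carrier R" "s' \<in> carrier R" using u p assms S_carrier by auto
  have "vadd (w u) (w (a' \<otimes> s \<ominus> a \<otimes> s')) = None"
    using u c p assms by (simp add: val_mult[symmetric])
  then have "w (a' \<otimes> s \<ominus> a \<otimes> s') = None"
    using val_S_finite[OF u(1)] by (cases "w u"; cases "w (a' \<otimes> s \<ominus> a \<otimes> s')") auto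
  then have "w (a' \<otimes> s) = w (a \<otimes> s')"
    using c p assms by (intro val_eq_if_diff_None) auto
  then have "vadd (w a') (w s) = vadd (w a) (w s')"
    using c p assms by (simp add: val_mult)
  moreover obtain g g' where "w s = Some g" "w s' = Some g'" using val_S_finite p assms by blast
  ultimately have "vsub (w a') (w s') = vsub (w a) (w s)" using vadd_cancel by metis
  then show ?thesis unfolding ext_val_def using p by simp
qed

lemma ext_val_frac_one: "a \<in> carrier R \<Longrightarrow> ext_val w (frac R S a \<one>) = w a"
  by (cases "w a") (simp_all add: ext_val_frac one_mem_S)

lemma prevalued_cring_loc: "prevalued_cring L (ext_val w)"
proof -
  interpret L: cring L by (rule cring_loc)
  show ?thesis
  proof (unfold_locales, unfold prevaluation_def, intro conjI ballI)
    fix x y assume "x \<in> carrier L" "y \<in> carrier L"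
    then show "ext_val w (x \<otimes>\<^bsub>L\<^esub> y) = vadd (ext_val w x) (ext_val w y)"
    proof (rule loc_cases2)
      fix a s c t assume h: "a \<in> carrier R" "s \<in> S" "c \<in> carrier R" "t \<in> S" "s \<in> carrier R" "t \<in> carrier R"
      obtain g h where "w s = Some g" "w t = Some h" using val_S_finite h by blast
      with h show "ext_val w (frac R S a s \<otimes>\<^bsub>L\<^esub> frac R S c t) =
          vadd (ext_val w (frac R S a s)) (ext_val w (frac R S c t))"
        by (simp add: frac_simps ext_val_frac val_mult vsub_vadd[of _ _ g h, simplified])
    qed
  next
    fix x y assume "x \<in> carrier L" "y \<in> carrier L"
    then show "vle (vmin (ext_val w x) (ext_val w y)) (ext_val w (x \<oplus>\<^bsub>L\<^esub> y))"
    proof (rule loc_cases2)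
      fix a s c t assume h: "a \<in> carrier R" "s \<in> S" "c \<in> carrier R" "t \<in> S" "s \<in> carrier R" "t \<in> carrier R"
      obtain g h where g: "w s = Some g" "w t = Some h" using val_S_finite h by blast
      have "vle (vmin (w (a \<otimes> t)) (w (c \<otimes> s))) (w (a \<otimes> t \<oplus> c \<otimes> s))"
        using h by (intro val_add) auto
      then have "vle (vmin (vadd (w a) (Some h)) (vadd (w c) (Some g))) (w (a \<otimes> t \<oplus> c \<otimes> s))"
        using h g by (simp add: val_mult)
      from vsub_vmin[OF this]
      show "vle (vmin (ext_val w (frac R S a s)) (ext_val w (frac R S c t)))
          (ext_val w (frac R S a s \<oplus>\<^bsub>L\<^esub> frac R S c t))"
        using h g by (simp add: frac_simps ext_val_frac val_mult)
    qed
  qed (simp_all add: one_loc zero_loc ext_val_frac_one)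
qed

end

section \<open>The local blowing up\<close>

locale blowup_setting = prevalued_cring R \<nu> for R (structure) and \<nu> +
  fixes b as
  assumes has_center: "has_center R \<nu>"
    and b_closed: "b \<in> carrier R" and val_b_finite: "\<nu> b \<noteq> None"
    and as_closed: "set as \<subseteq> carrier R"
    and val_b_le: "\<And>a. a \<in> set as \<Longrightarrow> vle (\<nu> b) (\<nu> a)"
begin

lemma val_nonneg: "a \<in> carrier R \<Longrightarrow> vle (Some 0) (\<nu> a)"
  using has_center unfolding has_center_def by auto

lemma powers_subset: "powers R b \<subseteq> carrier R"
  unfolding powers_def using b_closed by auto

lemma b_mem_powers: "b \<in> powers R b"
  unfolding powers_def using b_closed by (auto intro!: exI[of _ "1::nat"])

sublocale Rb: localized_prevaluation R "powers R b" \<nu>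
proof unfold_locales
  show "powers R b \<subseteq> carrier R" by (rule powers_subset)
  show "\<one> \<in> powers R b" unfolding powers_def by (auto intro!: exI[of _ "0::nat"])
  show "\<And>s t. s \<in> powers R b \<Longrightarrow> t \<in> powers R b \<Longrightarrow> s \<otimes> t \<in> powers R b"
    unfolding powers_def using b_closed by (auto simp: nat_pow_mult)
  show "\<And>s. s \<in> powers R b \<Longrightarrow> \<nu> s \<noteq> None"
    unfolding powers_def using b_closed val_b_finite val_pow_finite by auto
qed

abbreviation "Rb \<equiv> loc_at R b"

sublocale Rb_cring: cring Rb
  unfolding loc_at_def by (rule Rb.cring_loc)

sublocale Rb_val: prevalued_cring Rb "ext_val \<nu>"
  unfolding loc_at_def by (rule Rb.prevalued_cring_loc)

definition gens where
  "gens = (\<lambda>x. frac R (powers R b) x \<one>) ` carrier R \<union> (\<lambda>a. frac R (powers R b) a b) ` set as"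

abbreviation "G \<equiv> generate_ring Rb gens"
abbreviation "R' \<equiv> blowup_alg R b as"

lemma R'_eq: "R' = Rb\<lparr>carrier := G\<rparr>"
  unfolding blowup_alg_def gens_def by simp

lemma gens_subset: "gens \<subseteq> carrier Rb"
  unfolding gens_def loc_at_def using as_closed b_mem_powers Rb.one_mem_S by auto

lemma G_subset: "G \<subseteq> carrier Rb"
  using Rb_cring.generate_ring_incl[OF gens_subset] .

lemma R'_carrier [simp]: "carrier R' = G"
  by (simp add: R'_eq)

lemma R'_ops [simp]:
  "x \<otimes>\<^bsub>R'\<^esub> y = x \<otimes>\<^bsub>Rb\<^esub> y" "x \<oplus>\<^bsub>R'\<^esub> y = x \<oplus>\<^bsub>Rb\<^esub> y" "\<one>\<^bsub>R'\<^esub> = \<one>\<^bsub>Rb\<^esub>" "\<zero>\<^bsub>R'\<^esub> = \<zero>\<^bsub>Rb\<^esub>"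
  by (simp_all add: R'_eq)

sublocale R'_cring: cring R'
proof -
  have "subcring G Rb"
    by (rule Rb_cring.subcringI'[OF Rb_cring.generate_ring_is_subring[OF gens_subset]])
  then show "cring R'" unfolding R'_eq using Rb_cring.subcring_iff[OF G_subset] by simp
qed

sublocale R'_val: prevalued_cring R' "ext_val \<nu>"
  unfolding prevalued_cring_def prevalued_cring_axioms_def prevaluation_def
  using R'_cring.cring_axioms G_subset Rb_val.val_mult Rb_val.val_add by (auto simp: subset_iff)

lemma frac_one_mem_G: "x \<in> carrier R \<Longrightarrow> frac R (powers R b) x \<one> \<in> G"
  by (rule generate_ring.incl) (auto simp: gens_def)

lemma frac_b_mem_G: "a \<in> set as \<Longrightarrow> frac R (powers R b) a b \<in> G"
  by (rule generate_ring.incl) (auto simp: gens_def)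

text \<open>The hypotheses \<open>\<nu> b \<le> \<nu> a\<close> make the generators, and hence \<open>R'\<close>,
  have nonnegative value.\<close>

lemma has_center_R': "has_center R' (ext_val \<nu>)"
  unfolding has_center_def R'_carrier
proof
  fix V assume "V \<in> G"
  then show "vle (Some 0) (ext_val \<nu> V)"
  proof (induct rule: generate_ring.induct)
    case one
    then show ?case by simp
  next
    case (incl h)
    then show ?case
    proof (unfold gens_def, elim UnE imageE)
      fix x assume "x \<in> carrier R" "h = frac R (powers R b) x \<one>"
      then show ?thesis using Rb.ext_val_frac_one val_nonneg by simp
    next
      fix a assume a: "a \<in> set as" "h = frac R (powers R b) a b"
      then have "ext_val \<nu> h = vsub (\<nu> a) (\<nu> b)"
        using Rb.ext_val_frac as_closed b_mem_powers by auto
      then show ?thesis using val_b_le[OF a(1)] val_b_finite by (cases "\<nu> a"; cases "\<nu> b") auto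
    qed
  next
    case (a_inv h)
    then show ?case using Rb_val.val_uminus G_subset by auto
  next
    case (eng_add h1 h2)
    then have "vle (vmin (ext_val \<nu> h1) (ext_val \<nu> h2)) (ext_val \<nu> (h1 \<oplus>\<^bsub>Rb\<^esub> h2))"
      using Rb_val.val_add G_subset by auto
    then show ?case using eng_add(2,4) vle_trans unfolding vmin_def by (auto split: if_splits)
  next
    case (eng_mult h1 h2)
    then have "ext_val \<nu> (h1 \<otimes>\<^bsub>Rb\<^esub> h2) = vadd (ext_val \<nu> h1) (ext_val \<nu> h2)"
      using Rb_val.val_mult G_subset by auto
    then show ?case using eng_mult(2,4) by (cases "ext_val \<nu> h1"; cases "ext_val \<nu> h2") auto
  qed
qed

abbreviation "S' \<equiv> carrier R' - vcenter R' (ext_val \<nu>)"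

lemma mem_S'_iff: "V \<in> S' \<longleftrightarrow> V \<in> G \<and> ext_val \<nu> V = Some 0"
proof -
  have "V \<in> G \<Longrightarrow> vle (Some 0) (ext_val \<nu> V)"
    using has_center_R' unfolding has_center_def by auto
  then show ?thesis unfolding vcenter_def vlt_def by (cases "ext_val \<nu> V") auto
qed

sublocale R1: localized_prevaluation R' S' "ext_val \<nu>"
proof unfold_locales
  show "S' \<subseteq> carrier R'" by auto
  show "\<one>\<^bsub>R'\<^esub> \<in> S'"
    using mem_S'_iff[of "\<one>\<^bsub>Rb\<^esub>"] generate_ring.one[of Rb gens] by simp
  show "s \<otimes>\<^bsub>R'\<^esub> t \<in> S'" if "s \<in> S'" "t \<in> S'" for s t
  proof -
    have "s \<in> G" "t \<in> G" "ext_val \<nu> s = Some 0" "ext_val \<nu> t = Some 0"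
      using that mem_S'_iff by auto
    then have "s \<otimes>\<^bsub>R'\<^esub> t \<in> G" "ext_val \<nu> (s \<otimes>\<^bsub>R'\<^esub> t) = Some 0"
      using R'_val.val_mult[of s t] R'_cring.m_closed[of s t] by simp_all
    then show ?thesis using mem_S'_iff by blast
  qed
  show "\<And>s. s \<in> S' \<Longrightarrow> ext_val \<nu> s \<noteq> None" using mem_S'_iff by auto
qed

abbreviation "R1 \<equiv> loc R' S'"

lemma blowup_eq: "blowup R \<nu> b as = R1"
  unfolding blowup_def loc_prime_def by simp

sublocale R1_cring: cring R1
  by (rule R1.cring_loc)

sublocale R1_val: prevalued_cring R1 "blowup_val \<nu>"
  unfolding blowup_val_def by (rule R1.prevalued_cring_loc)

abbreviation "can_b x \<equiv> frac R (powers R b) x \<one>"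
abbreviation "can_1 V \<equiv> frac R' S' V \<one>\<^bsub>R'\<^esub>"
abbreviation "can x \<equiv> can_1 (can_b x)"

lemma can_b_hom: "can_b \<in> ring_hom R Rb"
  using Rb.frac_one_hom by (simp add: loc_at_def)

lemma can_b_hom_R': "can_b \<in> ring_hom R R'"
  unfolding R'_eq by (rule ring_hom_restrict_codomain[OF can_b_hom]) (auto intro: frac_one_mem_G)

lemma can_1_hom: "can_1 \<in> ring_hom R' R1"
  by (rule R1.frac_one_hom)

lemma can_hom: "can \<in> ring_hom R R1"
  using ring_hom_trans[OF can_b_hom_R' can_1_hom] by (simp add: comp_def)

lemma can_closed: "x \<in> carrier R \<Longrightarrow> can x \<in> carrier R1"
  using ring_hom_closed[OF can_hom] .

lemma can_mult: "x \<in> carrier R \<Longrightarrow> y \<in> carrier R \<Longrightarrow> can (x \<otimes> y) = can x \<otimes>\<^bsub>R1\<^esub> can y"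
  using ring_hom_mult[OF can_hom] by simp

lemma can_1_closed: "V \<in> G \<Longrightarrow> can_1 V \<in> carrier R1"
  using ring_hom_closed[OF can_1_hom] by simp

lemma can_1_mult: "V \<in> G \<Longrightarrow> W \<in> G \<Longrightarrow> can_1 (V \<otimes>\<^bsub>Rb\<^esub> W) = can_1 V \<otimes>\<^bsub>R1\<^esub> can_1 W"
  using ring_hom_mult[OF can_1_hom, of V W] by simp

lemma blowup_val_can_1: "V \<in> G \<Longrightarrow> blowup_val \<nu> (can_1 V) = ext_val \<nu> V"
  unfolding blowup_val_def using R1.ext_val_frac_one by simp

lemma blowup_val_can: "x \<in> carrier R \<Longrightarrow> blowup_val \<nu> (can x) = \<nu> x"
  using blowup_val_can_1 frac_one_mem_G Rb.ext_val_frac_one by simp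

lemma Rb_clear_denominator:
  assumes "V \<in> carrier Rb"
  obtains x \<beta> where "x \<in> carrier R" "\<beta> \<in> powers R b" "V \<otimes>\<^bsub>Rb\<^esub> can_b \<beta> = can_b x"
  using Rb.is_localization_loc assms unfolding is_localization_def loc_at_def by blast

lemma ext_val_clear_denominator:
  assumes "V \<in> carrier Rb" "x \<in> carrier R" "\<beta> \<in> powers R b" "V \<otimes>\<^bsub>Rb\<^esub> can_b \<beta> = can_b x"
  shows "vadd (ext_val \<nu> V) (\<nu> \<beta>) = \<nu> x"
proof -
  have "\<beta> \<in> carrier R" using assms powers_subset by auto
  then have "ext_val \<nu> (V \<otimes>\<^bsub>Rb\<^esub> can_b \<beta>) = vadd (ext_val \<nu> V) (\<nu> \<beta>)"
    using Rb_val.val_mult[OF assms(1)] ring_hom_closed[OF can_b_hom] Rb.ext_val_frac_one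
    by (simp add: loc_at_def)
  then show ?thesis using assms(2,4) Rb.ext_val_frac_one by simp
qed

lemma S'_clear_denominator:
  assumes "V \<in> S'"
  obtains d \<beta> where "d \<in> carrier R" "\<beta> \<in> powers R b" "V \<otimes>\<^bsub>Rb\<^esub> can_b \<beta> = can_b d" "\<nu> d = \<nu> \<beta>"
proof -
  have V: "V \<in> carrier Rb" "ext_val \<nu> V = Some 0" using assms mem_S'_iff G_subset by auto
  obtain d \<beta> where d: "d \<in> carrier R" "\<beta> \<in> powers R b" "V \<otimes>\<^bsub>Rb\<^esub> can_b \<beta> = can_b d"
    using Rb_clear_denominator[OF V(1)] by blast
  then have "\<nu> d = \<nu> \<beta>"
    using ext_val_clear_denominator[OF V(1) d] V(2) by (cases "\<nu> \<beta>") auto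
  with d show ?thesis using that by blast
qed

end

section \<open>The decomposition \<open>\<nu> = \<nu>\<^sub>1 \<circ> \<nu>\<^sub>2\<close>\<close>

locale decomposition = prevalued_cring R \<nu> for R (structure) and \<nu> + fixes \<Delta>
  assumes has_center: "has_center R \<nu>" and convex: "convex_subgroup \<Delta> (value_group R \<nu>)"
begin

abbreviation "P \<equiv> center1 R \<nu> \<Delta>"

lemma zero_mem_\<Delta>: "0 \<in> \<Delta>"
  and add_mem_\<Delta>: "x \<in> \<Delta> \<Longrightarrow> y \<in> \<Delta> \<Longrightarrow> x + y \<in> \<Delta>"
  and uminus_mem_\<Delta>: "x \<in> \<Delta> \<Longrightarrow> - x \<in> \<Delta>"
  using convex unfolding convex_subgroup_def add_subgroup_def by blast+

lemma val_mem_value_group: "a \<in> carrier R \<Longrightarrow> \<nu> a = Some g \<Longrightarrow> g \<in> value_group R \<nu>"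
  unfolding value_group_def by auto

lemma val_nonneg: "a \<in> carrier R \<Longrightarrow> vle (Some 0) (\<nu> a)"
  using has_center unfolding has_center_def by auto

lemma mem_P_iff: "a \<in> P \<longleftrightarrow> a \<in> carrier R \<and> (\<forall>\<delta>\<in>\<Delta>. vlt (Some \<delta>) (\<nu> a))"
  unfolding center1_def by auto

text \<open>Outside \<open>P\<close> the value lies in \<open>\<Delta>\<close>: it is at most some \<open>\<delta> \<in> \<Delta>\<close> and nonnegative,
  so convexity applies.\<close>

lemma val_notin_P:
  assumes "a \<in> carrier R" "a \<notin> P"
  obtains g where "\<nu> a = Some g" "g \<in> \<Delta>"
proof -
  obtain \<delta> where \<delta>: "\<delta> \<in> \<Delta>" "\<not> vlt (Some \<delta>) (\<nu> a)" using assms mem_P_iff by auto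
  then obtain g where g: "\<nu> a = Some g" "g \<le> \<delta>" unfolding vlt_def by (cases "\<nu> a") auto
  have "0 \<le> g" using val_nonneg[OF assms(1)] g by simp
  then have "g \<in> \<Delta>"
    using convex \<delta> g val_mem_value_group[OF assms(1) g(1)] zero_mem_\<Delta> unfolding convex_subgroup_def by blast
  with g show ?thesis using that by blast
qed

lemma mem_P_shift_iff:
  assumes "s \<in> carrier R" "s \<notin> P" "x \<in> carrier R" "vadd W (\<nu> s) = \<nu> x"
  shows "(\<forall>\<delta>\<in>\<Delta>. vlt (Some \<delta>) W) \<longleftrightarrow> x \<in> P"
proof -
  obtain g where g: "\<nu> s = Some g" "g \<in> \<Delta>" using val_notin_P assms by blast
  show ?thesis
  proof (cases W)
    case None
    then show ?thesis using assms g mem_P_iff by (auto simp: vlt_def)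
  next
    case (Some c)
    have "(\<forall>\<delta>\<in>\<Delta>. \<delta> < c) \<longleftrightarrow> (\<forall>\<delta>\<in>\<Delta>. \<delta> < c + g)"
    proof
      assume "\<forall>\<delta>\<in>\<Delta>. \<delta> < c"
      then show "\<forall>\<delta>\<in>\<Delta>. \<delta> < c + g"
        using add_mem_\<Delta>[OF _ uminus_mem_\<Delta>[OF g(2)]] by (fastforce simp: algebra_simps)
    next
      assume "\<forall>\<delta>\<in>\<Delta>. \<delta> < c + g"
      then show "\<forall>\<delta>\<in>\<Delta>. \<delta> < c" using add_mem_\<Delta> g(2) by fastforce
    qed
    moreover have "\<nu> x = Some (c + g)" using assms g Some by simp
    ultimately show ?thesis using Some assms(3) mem_P_iff by (auto simp: vlt_def)
  qed
qed

lemma mult_mem_P_iff: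
  assumes "a \<in> carrier R" "c \<in> carrier R"
  shows "a \<otimes> c \<in> P \<longleftrightarrow> a \<in> P \<or> c \<in> P"
proof
  assume ac: "a \<otimes> c \<in> P"
  show "a \<in> P \<or> c \<in> P"
  proof (rule ccontr)
    assume "\<not> (a \<in> P \<or> c \<in> P)"
    then obtain g h where "\<nu> a = Some g" "g \<in> \<Delta>" "\<nu> c = Some h" "h \<in> \<Delta>"
      using val_notin_P assms by metis
    then have "\<nu> (a \<otimes> c) = Some (g + h)" "g + h \<in> \<Delta>" using val_mult assms add_mem_\<Delta> by auto
    then show False using ac mem_P_iff by (auto simp: vlt_def)
  qed
next
  assume "a \<in> P \<or> c \<in> P"
  then show "a \<otimes> c \<in> P"
  proof
    assume "a \<in> P"
    then show ?thesis using assms val_nonneg[of c] val_mult[of a c] vlt_vadd_nonneg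
      unfolding mem_P_iff by auto
  next
    assume c: "c \<in> P"
    have "vlt (Some \<delta>) (\<nu> (a \<otimes> c))" if "\<delta> \<in> \<Delta>" for \<delta>
      using vlt_vadd_nonneg[of \<delta> "\<nu> c" "\<nu> a"] c that val_nonneg[OF assms(1)]
        val_mult[OF assms] vadd_comm[of "\<nu> a" "\<nu> c"] mem_P_iff by auto
    then show ?thesis using assms mem_P_iff by auto
  qed
qed

lemma one_notin_P: "\<one> \<notin> P"
  using zero_mem_\<Delta> mem_P_iff by (auto simp: vlt_def)

lemma ideal_P: "ideal P R"
proof (intro subgroup.intro idealI[OF ring_axioms], simp_all add: a_inv_def[symmetric])
  show "P \<subseteq> carrier R" using mem_P_iff by auto
  show "\<zero> \<in> P" using mem_P_iff by (auto simp: vlt_def)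
  show "x \<oplus> y \<in> P" if "x \<in> P" "y \<in> P" for x y
    using that val_add vlt_vmin vlt_vle_trans mem_P_iff by (meson add.m_closed)
  show "\<And>x. x \<in> P \<Longrightarrow> \<ominus> x \<in> P" using val_uminus mem_P_iff by auto
  show "\<And>a x. a \<in> P \<Longrightarrow> x \<in> carrier R \<Longrightarrow> x \<otimes> a \<in> P" using mult_mem_P_iff mem_P_iff by blast
  show "\<And>a x. a \<in> P \<Longrightarrow> x \<in> carrier R \<Longrightarrow> a \<otimes> x \<in> P" using mult_mem_P_iff mem_P_iff by blast
qed

lemma mem_P_iff_same_val: "a \<in> carrier R \<Longrightarrow> c \<in> carrier R \<Longrightarrow> \<nu> a = \<nu> c \<Longrightarrow> a \<in> P \<longleftrightarrow> c \<in> P"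
  using mem_P_iff by auto

lemma mult_compl_P: "a \<in> carrier R - P \<Longrightarrow> c \<in> carrier R - P \<Longrightarrow> a \<otimes> c \<in> carrier R - P"
  using mult_mem_P_iff by auto

sublocale RP: localization R "carrier R - P"
  by unfold_locales (use one_notin_P mult_compl_P in auto)

sublocale P: ideal P R
  by (rule ideal_P)

abbreviation "Rq \<equiv> R Quot P"
abbreviation "\<nu>q \<equiv> nu2 R \<nu> P"

lemma cring_Rq: "cring Rq"
  by (rule P.quotient_is_cring[OF is_cring])

lemma coset_hom: "(\<lambda>x. P +> x) \<in> ring_hom R Rq"
  by (rule P.rcos_ring_hom)

lemma Rq_carrier: "carrier Rq = (\<lambda>x. P +> x) ` carrier R"
  unfolding FactRing_def A_RCOSETS_def' by auto

lemma Rq_cases: "U \<in> carrier Rq \<Longrightarrow> (\<And>x. x \<in> carrier R \<Longrightarrow> U = P +> x \<Longrightarrow> Q) \<Longrightarrow> Q"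
  using Rq_carrier by auto

lemma Rq_zero: "\<zero>\<^bsub>Rq\<^esub> = P"
  unfolding FactRing_def by simp

lemma coset_eq_P_iff: "x \<in> carrier R \<Longrightarrow> P +> x = P \<longleftrightarrow> x \<in> P"
  using P.a_rcos_self P.a_rcos_const by metis

lemma coset_subset_P_iff: "x \<in> carrier R \<Longrightarrow> P +> x \<subseteq> P \<longleftrightarrow> x \<in> P"
  using P.a_rcos_self P.a_rcos_const by blast

text \<open>This is what makes \<open>nu2\<close> independent of the representative chosen by \<open>SOME\<close>.\<close>

lemma val_add_P:
  assumes "p \<in> P" "x \<in> carrier R" "x \<notin> P"
  shows "\<nu> (p \<oplus> x) = \<nu> x"
proof -
  have p: "p \<in> carrier R" using assms mem_P_iff by auto
  obtain g where g: "\<nu> x = Some g" "g \<in> \<Delta>" using val_notin_P assms by blast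
  have lt: "vlt (\<nu> x) (\<nu> p)" using assms(1) g mem_P_iff by auto
  then have "\<not> vle (\<nu> p) (\<nu> x)" using vle_antisym unfolding vlt_def by blast
  then have "vle (\<nu> x) (\<nu> (p \<oplus> x))" using val_add[OF p assms(2)] unfolding vmin_def by simp
  moreover have "x = (p \<oplus> x) \<oplus> \<ominus> p" using p assms(2) by algebra
  then have "vle (vmin (\<nu> (p \<oplus> x)) (\<nu> p)) (\<nu> x)"
    using val_add[of "p \<oplus> x" "\<ominus> p"] val_uminus[OF p] p assms(2) by simp
  ultimately show ?thesis
    using lt vle_antisym unfolding vmin_def vlt_def by (cases "vle (\<nu> (p \<oplus> x)) (\<nu> p)") auto
qed

lemma nu2_coset: "x \<in> carrier R \<Longrightarrow> \<nu>q (P +> x) = (if x \<in> P then None else \<nu> x)"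
proof (cases "x \<in> P")
  case False
  assume x: "x \<in> carrier R"
  have "(SOME a. a \<in> P +> x) \<in> P +> x" using P.a_rcos_self[OF x] by (rule someI)
  then obtain p where "p \<in> P" "(SOME a. a \<in> P +> x) = p \<oplus> x" unfolding a_r_coset_def' by auto
  then show ?thesis using False x coset_subset_P_iff val_add_P unfolding nu2_def by simp
qed (simp add: coset_subset_P_iff nu2_def)

lemma prevalued_Rq: "prevalued_cring Rq \<nu>q"
proof -
  interpret Q: cring Rq by (rule cring_Rq)
  have [simp]: "x \<in> carrier R \<Longrightarrow> y \<in> carrier R \<Longrightarrow> (P +> x) \<otimes>\<^bsub>Rq\<^esub> (P +> y) = P +> (x \<otimes> y)"
    "x \<in> carrier R \<Longrightarrow> y \<in> carrier R \<Longrightarrow> (P +> x) \<oplus>\<^bsub>Rq\<^esub> (P +> y) = P +> (x \<oplus> y)"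
    "\<one>\<^bsub>Rq\<^esub> = P +> \<one>" for x y
    using ring_hom_mult[OF coset_hom] ring_hom_add[OF coset_hom] ring_hom_one[OF coset_hom] by simp_all
  show ?thesis
  proof (unfold_locales, unfold prevaluation_def, intro conjI ballI)
    fix U V assume "U \<in> carrier Rq" "V \<in> carrier Rq"
    then obtain x y where xy: "x \<in> carrier R" "y \<in> carrier R" "U = P +> x" "V = P +> y"
      using Rq_cases by metis
    show "\<nu>q (U \<otimes>\<^bsub>Rq\<^esub> V) = vadd (\<nu>q U) (\<nu>q V)"
      using xy mult_mem_P_iff[of x y] by (simp add: nu2_coset val_mult)
    have "vle (vmin (\<nu> x) (\<nu> y)) (\<nu> (x \<oplus> y))" using val_add xy by auto
    moreover have "x \<in> P \<Longrightarrow> y \<in> P \<Longrightarrow> x \<oplus> y \<in> P" by (rule P.a_closed)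
    moreover have "x \<in> P \<Longrightarrow> y \<notin> P \<Longrightarrow> \<nu> (x \<oplus> y) = \<nu> y" using val_add_P xy by auto
    moreover have "x \<notin> P \<Longrightarrow> y \<in> P \<Longrightarrow> \<nu> (x \<oplus> y) = \<nu> x"
      using val_add_P[of y x] xy by (simp add: a_comm)
    ultimately show "vle (vmin (\<nu>q U) (\<nu>q V)) (\<nu>q (U \<oplus>\<^bsub>Rq\<^esub> V))"
      using xy by (auto simp: nu2_coset)
  next
    show "\<nu>q \<one>\<^bsub>Rq\<^esub> = Some 0" using one_notin_P by (simp add: nu2_coset)
    show "\<nu>q \<zero>\<^bsub>Rq\<^esub> = None" using Rq_zero unfolding nu2_def by simp
  qed
qed

lemma has_center_Rq: "has_center Rq \<nu>q"
  unfolding has_center_def using val_nonneg by (auto elim!: Rq_cases simp: nu2_coset)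

lemma blowup_data_liftE:
  assumes "blowup_data Rq \<nu>q bbar abar"
  obtains b as where "blowup_data R \<nu> b as" "b \<notin> P"
    "P +> b = bbar" "abar = map (\<lambda>a. P +> a) as"
proof -
  have bd: "bbar \<in> carrier Rq" "\<nu>q bbar \<noteq> None" "set abar \<subseteq> carrier Rq"
    "\<And>a. a \<in> set abar \<Longrightarrow> vle (\<nu>q bbar) (\<nu>q a)"
    using assms unfolding blowup_data_def vsupp_def by auto
  define lift where "lift y = (SOME x. x \<in> carrier R \<and> P +> x = y)" for y
  have lift: "lift y \<in> carrier R" "P +> lift y = y" if "y \<in> carrier Rq" for y
    using someI_ex[of "\<lambda>x. x \<in> carrier R \<and> P +> x = y"] that Rq_carrier
    unfolding lift_def by auto
  define b where "b = lift bbar"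
  define as where "as = map lift abar"
  have b: "b \<in> carrier R" "P +> b = bbar" using lift bd b_def by auto
  have as: "set as \<subseteq> carrier R" "abar = map (\<lambda>a. P +> a) as"
    using lift bd(3) unfolding as_def by (auto simp: map_idI subset_iff)
  have bP: "b \<notin> P" using bd(2) b nu2_coset[of b] by (auto split: if_splits)
  obtain g where g: "\<nu> b = Some g" "g \<in> \<Delta>" using val_notin_P b bP by blast
  have "vle (\<nu> b) (\<nu> a)" if "a \<in> set as" for a
  proof (cases "a \<in> P")
    case True
    then show ?thesis using g mem_P_iff unfolding vlt_def by auto
  next
    case False
    have "P +> a \<in> set abar" using that as by simp
    then have "vle (\<nu>q bbar) (\<nu>q (P +> a))" using bd(4) by blast
    moreover have "a \<in> carrier R" using that as(1) by auto
    ultimately show ?thesis using nu2_coset[OF b(1)] b(2) bP False by (simp add: nu2_coset)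
  qed
  then have "blowup_data R \<nu> b as"
    unfolding blowup_data_def vsupp_def using b as g by auto
  then show ?thesis using that bP b as by blast
qed

end

section \<open>Lifting the blowing up of \<open>R/P\<close> to \<open>R\<close>\<close>

lemma (in cring) mult_fractions_eq:
  assumes "z \<in> carrier R" "v \<in> carrier R" "w \<in> carrier R" "p \<in> carrier R" "q \<in> carrier R"
    and "z \<otimes> w = v" "v \<otimes> p = c" "w \<otimes> q = d"
  shows "z \<otimes> (d \<otimes> p) = c \<otimes> q"
proof -
  have "z \<otimes> (d \<otimes> p) = z \<otimes> ((w \<otimes> q) \<otimes> p)" by (simp only: assms(8))
  also have "\<dots> = (z \<otimes> w) \<otimes> p \<otimes> q" using assms(1-5) by algebra
  finally show ?thesis by (simp only: assms(6,7))
qed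

lemma (in cring) mult_eq_zero_transfer:
  assumes "y \<in> carrier R" "u \<in> carrier R" "p \<in> carrier R" "y \<otimes> u = \<zero>" "y \<otimes> p = q"
  shows "q \<otimes> u = \<zero>"
proof -
  have "q \<otimes> u = (y \<otimes> p) \<otimes> u" by (simp only: assms(5))
  also have "\<dots> = (y \<otimes> u) \<otimes> p" using assms(1-3) by algebra
  finally show ?thesis using assms(3,4) by simp
qed

locale lifted_blowup = decomposition R \<nu> \<Delta> + blowup_setting R \<nu> b as
  for R (structure) and \<nu> \<Delta> b as +
  assumes b_notin_P: "b \<notin> P"
begin

abbreviation "P1 \<equiv> center1 R1 (blowup_val \<nu>) \<Delta>"

lemma powers_subset_compl_P: "powers R b \<subseteq> carrier R - P"
proof -
  have "b [^] (n::nat) \<in> carrier R - P" for n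
    by (induct n) (use one_notin_P b_closed b_notin_P mult_mem_P_iff in \<open>auto simp: nat_pow_Suc2\<close>)
  then show ?thesis unfolding powers_def by auto
qed

lemma S'_clear_denominator_compl_P:
  assumes "V \<in> S'"
  obtains d \<beta> where "d \<in> carrier R - P" "\<beta> \<in> powers R b" "V \<otimes>\<^bsub>Rb\<^esub> can_b \<beta> = can_b d"
proof -
  obtain d \<beta> where d: "d \<in> carrier R" "\<beta> \<in> powers R b" "V \<otimes>\<^bsub>Rb\<^esub> can_b \<beta> = can_b d" "\<nu> d = \<nu> \<beta>"
    using S'_clear_denominator[OF assms] by blast
  then have "d \<notin> P" using mem_P_iff_same_val[of d \<beta>] powers_subset_compl_P by auto
  with d show ?thesis using that by blast
qed

lemma R1_clear_denominator:
  assumes "Z \<in> carrier R1"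
  obtains x s where "x \<in> carrier R" "s \<in> carrier R - P" "Z \<otimes>\<^bsub>R1\<^esub> can s = can x"
proof -
  obtain V W where VW: "V \<in> G" "W \<in> S'" "Z \<otimes>\<^bsub>R1\<^esub> can_1 W = can_1 V"
    using R1.is_localization_loc assms unfolding is_localization_def by auto
  obtain c \<beta> where c: "c \<in> carrier R" "\<beta> \<in> powers R b" "V \<otimes>\<^bsub>Rb\<^esub> can_b \<beta> = can_b c"
    using Rb_clear_denominator G_subset VW(1) by blast
  obtain d \<gamma> where d: "d \<in> carrier R - P" "\<gamma> \<in> powers R b" "W \<otimes>\<^bsub>Rb\<^esub> can_b \<gamma> = can_b d"
    using S'_clear_denominator_compl_P[OF VW(2)] by blast
  have \<beta>\<gamma>: "\<beta> \<in> carrier R - P" "\<gamma> \<in> carrier R - P" using powers_subset_compl_P c d by auto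
  have W: "W \<in> G" using VW(2) by simp
  have V\<beta>: "can_1 V \<otimes>\<^bsub>R1\<^esub> can \<beta> = can c"
    using can_1_mult[OF VW(1) frac_one_mem_G, of \<beta>] c \<beta>\<gamma> by simp
  have W\<gamma>: "can_1 W \<otimes>\<^bsub>R1\<^esub> can \<gamma> = can d"
    using can_1_mult[OF W frac_one_mem_G, of \<gamma>] d \<beta>\<gamma> by simp
  have "Z \<otimes>\<^bsub>R1\<^esub> (can d \<otimes>\<^bsub>R1\<^esub> can \<beta>) = can c \<otimes>\<^bsub>R1\<^esub> can \<gamma>"
    by (rule R1_cring.mult_fractions_eq[OF assms can_1_closed[OF VW(1)] can_1_closed[OF W]
          can_closed can_closed VW(3) V\<beta> W\<gamma>]) (use \<beta>\<gamma> in auto)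
  then have "Z \<otimes>\<^bsub>R1\<^esub> can (d \<otimes> \<beta>) = can (c \<otimes> \<gamma>)" using can_mult \<beta>\<gamma> c d by simp
  moreover have "d \<otimes> \<beta> \<in> carrier R - P" using mult_compl_P d \<beta>\<gamma> by auto
  ultimately show ?thesis using that c \<beta>\<gamma> by blast
qed

lemma mem_P1_iff:
  assumes "Z \<in> carrier R1" "Z \<otimes>\<^bsub>R1\<^esub> can s = can x" "s \<in> carrier R - P" "x \<in> carrier R"
  shows "Z \<in> P1 \<longleftrightarrow> x \<in> P"
proof -
  have "blowup_val \<nu> (Z \<otimes>\<^bsub>R1\<^esub> can s) = vadd (blowup_val \<nu> Z) (blowup_val \<nu> (can s))"
    using R1_val.val_mult assms can_closed by blast
  then have "vadd (blowup_val \<nu> Z) (\<nu> s) = \<nu> x" using assms blowup_val_can by simp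
  then have "(\<forall>\<delta>\<in>\<Delta>. vlt (Some \<delta>) (blowup_val \<nu> Z)) \<longleftrightarrow> x \<in> P"
    using mem_P_shift_iff assms by blast
  then show ?thesis using assms(1) unfolding center1_def by blast
qed

lemma can_compl_P:
  assumes "s \<in> carrier R - P"
  shows "can s \<in> carrier R1 - P1"
proof -
  have "can s \<otimes>\<^bsub>R1\<^esub> can \<one> = can s"
    using R1_cring.r_one can_closed assms ring_hom_one[OF can_hom] by simp
  then show ?thesis using mem_P1_iff[of "can s" \<one> s] assms can_closed one_notin_P by simp
qed

sublocale R1P1: localization R1 "carrier R1 - P1"
proof unfold_locales
  show "\<one>\<^bsub>R1\<^esub> \<in> carrier R1 - P1" using can_compl_P[of \<one>] one_notin_P ring_hom_one[OF can_hom] by simp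
  fix Z Z' assume Z: "Z \<in> carrier R1 - P1" and Z': "Z' \<in> carrier R1 - P1"
  obtain x s where xs: "x \<in> carrier R" "s \<in> carrier R - P" "Z \<otimes>\<^bsub>R1\<^esub> can s = can x"
    using R1_clear_denominator Z by blast
  obtain x' s' where xs': "x' \<in> carrier R" "s' \<in> carrier R - P" "Z' \<otimes>\<^bsub>R1\<^esub> can s' = can x'"
    using R1_clear_denominator Z' by blast
  have closed: "Z \<in> carrier R1" "Z' \<in> carrier R1" "can s \<in> carrier R1" "can s' \<in> carrier R1"
    using Z Z' can_closed xs xs' by auto
  have "(Z \<otimes>\<^bsub>R1\<^esub> Z') \<otimes>\<^bsub>R1\<^esub> (can s \<otimes>\<^bsub>R1\<^esub> can s') = (Z \<otimes>\<^bsub>R1\<^esub> can s) \<otimes>\<^bsub>R1\<^esub> (Z' \<otimes>\<^bsub>R1\<^esub> can s')"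
    using closed by algebra
  then have "(Z \<otimes>\<^bsub>R1\<^esub> Z') \<otimes>\<^bsub>R1\<^esub> can (s \<otimes> s') = can (x \<otimes> x')"
    using xs xs' can_mult by simp
  moreover have "x \<otimes> x' \<notin> P" using mem_P1_iff xs xs' Z Z' mult_mem_P_iff by auto
  moreover have "s \<otimes> s' \<in> carrier R - P" using mult_compl_P xs xs' by auto
  ultimately have "Z \<otimes>\<^bsub>R1\<^esub> Z' \<notin> P1"
    using mem_P1_iff R1_cring.m_closed[OF closed(1,2)] xs(1) xs'(1) by blast
  then show "Z \<otimes>\<^bsub>R1\<^esub> Z' \<in> carrier R1 - P1" using R1_cring.m_closed[OF closed(1,2)] by blast
qed auto

abbreviation "R1_P1 \<equiv> loc R1 (carrier R1 - P1)"
abbreviation "can_P1 Z \<equiv> frac R1 (carrier R1 - P1) Z \<one>\<^bsub>R1\<^esub>"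

lemma can_P1_hom: "can_P1 \<in> ring_hom R1 R1_P1"
  by (rule R1P1.frac_one_hom)

lemma can_P1_can_hom: "can_P1 \<circ> can \<in> ring_hom R R1_P1"
  by (rule ring_hom_trans[OF can_hom can_P1_hom])

lemma B_clear_denominator:
  assumes "y \<in> carrier R1_P1"
  shows "\<exists>x\<in>carrier R. \<exists>s\<in>carrier R - P. y \<otimes>\<^bsub>R1_P1\<^esub> can_P1 (can s) = can_P1 (can x)"
proof -
  interpret R1_P1_cring: cring R1_P1 by (rule R1P1.cring_loc)
  obtain Z1 Z2 where Z: "Z1 \<in> carrier R1" "Z2 \<in> carrier R1 - P1" "y \<otimes>\<^bsub>R1_P1\<^esub> can_P1 Z2 = can_P1 Z1"
    using R1P1.is_localization_loc assms unfolding is_localization_def by blast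
  obtain x1 s1 where 1: "x1 \<in> carrier R" "s1 \<in> carrier R - P" "Z1 \<otimes>\<^bsub>R1\<^esub> can s1 = can x1"
    using R1_clear_denominator Z by blast
  obtain x2 s2 where 2: "x2 \<in> carrier R" "s2 \<in> carrier R - P" "Z2 \<otimes>\<^bsub>R1\<^esub> can s2 = can x2"
    using R1_clear_denominator[of Z2] Z by blast
  have x2: "x2 \<notin> P" using mem_P1_iff 2 Z by auto
  have closed: "can_P1 Z \<in> carrier R1_P1" if "Z \<in> carrier R1" for Z
    using ring_hom_closed[OF can_P1_hom] that .
  have Z1: "can_P1 Z1 \<otimes>\<^bsub>R1_P1\<^esub> can_P1 (can s1) = can_P1 (can x1)"
    using ring_hom_mult[OF can_P1_hom, of Z1 "can s1"] 1 Z can_closed by simp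
  have Z2: "can_P1 Z2 \<otimes>\<^bsub>R1_P1\<^esub> can_P1 (can s2) = can_P1 (can x2)"
    using ring_hom_mult[OF can_P1_hom, of Z2 "can s2"] 2 Z can_closed by simp
  have "y \<otimes>\<^bsub>R1_P1\<^esub> (can_P1 (can x2) \<otimes>\<^bsub>R1_P1\<^esub> can_P1 (can s1)) = can_P1 (can x1) \<otimes>\<^bsub>R1_P1\<^esub> can_P1 (can s2)"
    by (rule R1_P1_cring.mult_fractions_eq[OF assms closed closed closed closed Z(3) Z1 Z2])
      (use Z 1 2 can_closed in auto)
  then have "y \<otimes>\<^bsub>R1_P1\<^esub> can_P1 (can (x2 \<otimes> s1)) = can_P1 (can (x1 \<otimes> s2))"
    using ring_hom_mult[OF can_P1_can_hom] 1 2 by simp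
  moreover have "x2 \<otimes> s1 \<in> carrier R - P" using mult_compl_P 1 2 x2 by auto
  ultimately show ?thesis using 1 2 by blast
qed

lemma can_P1_can_eq_zeroD:
  assumes x: "x \<in> carrier R" and zero: "can_P1 (can x) = \<zero>\<^bsub>R1_P1\<^esub>"
  shows "\<exists>s\<in>carrier R - P. s \<otimes> x = \<zero>"
proof -
  obtain Y where Y: "Y \<in> carrier R1 - P1" "Y \<otimes>\<^bsub>R1\<^esub> can x = \<zero>\<^bsub>R1\<^esub>"
    using R1P1.frac_one_eq_zeroD[OF can_closed[OF x] zero] by auto
  obtain x2 s2 where 2: "x2 \<in> carrier R" "s2 \<in> carrier R - P" "Y \<otimes>\<^bsub>R1\<^esub> can s2 = can x2"
    using R1_clear_denominator[of Y] Y by blast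
  have x2: "x2 \<notin> P" using mem_P1_iff 2 Y by auto
  have "can x2 \<otimes>\<^bsub>R1\<^esub> can x = \<zero>\<^bsub>R1\<^esub>"
    by (rule R1_cring.mult_eq_zero_transfer[OF _ can_closed can_closed Y(2) 2(3)]) (use Y x 2 in auto)
  then have "can_1 (can_b (x2 \<otimes> x)) = \<zero>\<^bsub>R1\<^esub>" using can_mult 2 x by simp
  then obtain V where V: "V \<in> S'" "V \<otimes>\<^bsub>R'\<^esub> can_b (x2 \<otimes> x) = \<zero>\<^bsub>R'\<^esub>"
    using R1.frac_one_eq_zeroD frac_one_mem_G 2 x by (metis R'_carrier m_closed)
  obtain d \<beta> where d: "d \<in> carrier R - P" "\<beta> \<in> powers R b" "V \<otimes>\<^bsub>Rb\<^esub> can_b \<beta> = can_b d"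
    using S'_clear_denominator_compl_P[OF V(1)] by blast
  have "can_b d \<otimes>\<^bsub>Rb\<^esub> can_b (x2 \<otimes> x) = \<zero>\<^bsub>Rb\<^esub>"
    by (rule Rb_cring.mult_eq_zero_transfer[OF _ _ _ _ d(3)])
      (use V x 2 d powers_subset G_subset ring_hom_closed[OF can_b_hom] in auto)
  then have "can_b (d \<otimes> (x2 \<otimes> x)) = \<zero>\<^bsub>Rb\<^esub>"
    using ring_hom_mult[OF can_b_hom, of d "x2 \<otimes> x"] d x 2 by simp
  moreover have "d \<otimes> (x2 \<otimes> x) \<in> carrier R" using d x 2 by auto
  ultimately obtain \<beta>' where \<beta>': "\<beta>' \<in> powers R b" "\<beta>' \<otimes> (d \<otimes> (x2 \<otimes> x)) = \<zero>"
    using Rb.frac_one_eq_zeroD unfolding loc_at_def by blast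
  have "\<beta>' \<in> carrier R - P" using powers_subset_compl_P \<beta>' by auto
  then have "(\<beta>' \<otimes> d \<otimes> x2) \<otimes> x = \<zero>" "\<beta>' \<otimes> d \<otimes> x2 \<in> carrier R - P"
    using \<beta>' d x 2 x2 mult_compl_P by (auto simp: m_assoc)
  then show ?thesis by blast
qed

lemma is_localization_R1_P1: "is_localization R (carrier R - P) R1_P1 (can_P1 \<circ> can)"
  unfolding is_localization_def
proof (intro conjI ballI impI)
  show "\<And>s. s \<in> carrier R - P \<Longrightarrow> (can_P1 \<circ> can) s \<in> Units R1_P1"
    using R1P1.frac_one_Units can_compl_P by simp
qed (use can_P1_can_hom B_clear_denominator can_P1_can_eq_zeroD in auto)

lemma loc_prime_iso: "loc_prime R P \<simeq> loc_prime R1 P1"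
  unfolding loc_prime_def
  using RP.is_localization_iso[OF R1P1.cring_loc is_localization_R1_P1] .

end

locale quotient_blowup = lifted_blowup R \<nu> \<Delta> b as for R (structure) and \<nu> \<Delta> b as +
  fixes bb ab
  assumes bb_eq: "P +> b = bb" and ab_eq: "ab = map (\<lambda>a. P +> a) as"
    and blowup_data_Rq: "blowup_data Rq \<nu>q bb ab"
begin

sublocale Q: blowup_setting Rq \<nu>q bb ab
  using blowup_data_Rq prevalued_Rq has_center_Rq
  unfolding blowup_setting_def blowup_setting_axioms_def blowup_data_def vsupp_def by auto

abbreviation "res x \<equiv> P +> x"
abbreviation "res_b x \<equiv> Q.can_b (res x)"

lemma res_closed: "x \<in> carrier R \<Longrightarrow> res x \<in> carrier Rq"
  using ring_hom_closed[OF coset_hom] .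

lemma res_b_hom: "res_b \<in> ring_hom R Q.Rb"
  using ring_hom_trans[OF coset_hom Q.can_b_hom] by (simp add: comp_def)

lemma res_pow: "x \<in> carrier R \<Longrightarrow> res (x [^] (n::nat)) = res x [^]\<^bsub>Rq\<^esub> n"
  using ring_hom_ring.hom_nat_pow[OF ring_hom_ringI2[OF ring_axioms Q.ring_axioms coset_hom]] by simp

lemma res_powers: "\<beta> \<in> powers R b \<Longrightarrow> res \<beta> \<in> powers Rq bb"
  unfolding powers_def using res_pow b_closed bb_eq by auto

lemma powers_Rq: "\<gamma> \<in> powers Rq bb \<Longrightarrow> \<exists>\<beta>\<in>powers R b. \<gamma> = res \<beta>"
  unfolding powers_def using res_pow b_closed bb_eq by auto

lemma res_b_Units: "\<beta> \<in> powers R b \<Longrightarrow> res_b \<beta> \<in> Units Q.Rb"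
  using Q.Rb.frac_one_Units[OF res_powers] by (simp add: loc_at_def)

sublocale to_Qb: localization_lift R "powers R b" Q.Rb res_b
  unfolding localization_lift_def localization_lift_axioms_def
  using Rb.localization_axioms Q.Rb_cring.cring_axioms res_b_hom res_b_Units by blast

abbreviation "psi \<equiv> to_Qb.lift"

lemma psi_hom: "psi \<in> ring_hom Rb Q.Rb"
  using to_Qb.lift_hom by (simp add: loc_at_def)

sublocale psi: ring_hom_cring Rb Q.Rb psi
  by unfold_locales (rule psi_hom)

lemma psi_can_b: "x \<in> carrier R \<Longrightarrow> psi (can_b x) = res_b x"
  by (rule to_Qb.lift_frac_one)

lemma psi_frac_b: "a \<in> carrier R \<Longrightarrow> psi (frac R (powers R b) a b) = frac Rq (powers Rq bb) (res a) bb"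
  using to_Qb.lift_frac[OF _ b_mem_powers] Q.Rb.frac_eq_mult_inv[OF res_closed Q.b_mem_powers]
  by (simp add: bb_eq loc_at_def)

lemma psi_mem_G: "V \<in> G \<Longrightarrow> psi V \<in> Q.G"
proof (induct rule: generate_ring.induct)
  case (incl h)
  then show ?case
  proof (unfold gens_def, elim UnE imageE)
    fix x assume "x \<in> carrier R" "h = can_b x"
    then show ?thesis using psi_can_b Q.frac_one_mem_G res_closed by simp
  next
    fix a assume "a \<in> set as" "h = frac R (powers R b) a b"
    then show ?thesis using psi_frac_b as_closed Q.frac_b_mem_G ab_eq by auto
  qed
qed (use G_subset generate_ring.intros in \<open>auto simp: subset_iff\<close>)

lemma psi_image_G: "W \<in> Q.G \<Longrightarrow> \<exists>V\<in>G. W = psi V"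
proof (induct rule: generate_ring.induct)
  case one
  then show ?case using generate_ring.one by force
next
  case (incl h)
  then show ?case
  proof (unfold Q.gens_def, elim UnE imageE)
    fix y assume "y \<in> carrier Rq" "h = Q.can_b y"
    then show ?thesis using psi_can_b frac_one_mem_G by (metis Rq_cases)
  next
    fix a' assume a': "a' \<in> set ab" "h = frac Rq (powers Rq bb) a' bb"
    then obtain a where "a \<in> set as" "a' = res a" using ab_eq by auto
    then show ?thesis using psi_frac_b as_closed frac_b_mem_G a' by blast
  qed
next
  case (a_inv h)
  then obtain V where "V \<in> G" "h = psi V" by blast
  then show ?case
    using G_subset generate_ring.a_inv by (auto simp: subset_iff intro!: bexI[of _ "\<ominus>\<^bsub>Rb\<^esub> V"])
next
  case (eng_add h1 h2)
  then obtain V1 V2 where "V1 \<in> G" "h1 = psi V1" "V2 \<in> G" "h2 = psi V2" by blast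
  then show ?case
    using G_subset generate_ring.eng_add by (auto simp: subset_iff intro!: bexI[of _ "V1 \<oplus>\<^bsub>Rb\<^esub> V2"])
next
  case (eng_mult h1 h2)
  then obtain V1 V2 where "V1 \<in> G" "h1 = psi V1" "V2 \<in> G" "h2 = psi V2" by blast
  then show ?case
    using G_subset generate_ring.eng_mult by (auto simp: subset_iff intro!: bexI[of _ "V1 \<otimes>\<^bsub>Rb\<^esub> V2"])
qed

lemma psi_hom_R': "psi \<in> ring_hom R' Q.R'"
  unfolding R'_eq Q.R'_eq
  by (rule ring_hom_restrict_codomain[OF ring_hom_restrict_domain[OF psi_hom G_subset]])
    (use psi_mem_G in auto)

lemma psi_clear_denominator:
  assumes "V \<in> carrier Rb" "c \<in> carrier R" "\<beta> \<in> powers R b" "V \<otimes>\<^bsub>Rb\<^esub> can_b \<beta> = can_b c"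
  shows "psi V \<otimes>\<^bsub>Q.Rb\<^esub> res_b \<beta> = res_b c"
proof -
  have "\<beta> \<in> carrier R" using assms powers_subset by auto
  then have "psi (V \<otimes>\<^bsub>Rb\<^esub> can_b \<beta>) = psi V \<otimes>\<^bsub>Q.Rb\<^esub> res_b \<beta>"
    using psi.hom_mult assms(1) ring_hom_closed[OF can_b_hom] psi_can_b by metis
  then show ?thesis using assms psi_can_b by simp
qed

lemma ext_val_psi:
  assumes "V \<in> carrier Rb" "c \<in> carrier R" "\<beta> \<in> powers R b" "V \<otimes>\<^bsub>Rb\<^esub> can_b \<beta> = can_b c"
  shows "vadd (ext_val \<nu>q (psi V)) (\<nu>q (res \<beta>)) = \<nu>q (res c)"
  using Q.ext_val_clear_denominator[OF psi.hom_closed[OF assms(1)] res_closed[OF assms(2)]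
      res_powers[OF assms(3)] psi_clear_denominator[OF assms]] .

lemma psi_mem_S'_iff:
  assumes "V \<in> G"
  shows "psi V \<in> Q.S' \<longleftrightarrow> V \<in> S'"
proof -
  have V: "V \<in> carrier Rb" using assms G_subset by auto
  obtain c \<beta> where c: "c \<in> carrier R" "\<beta> \<in> powers R b" "V \<otimes>\<^bsub>Rb\<^esub> can_b \<beta> = can_b c"
    using Rb_clear_denominator[OF V] by blast
  have \<beta>: "\<beta> \<in> carrier R - P" using powers_subset_compl_P c by auto
  obtain g where g: "\<nu> \<beta> = Some g" using val_notin_P \<beta> by blast
  have res_\<beta>: "\<nu>q (res \<beta>) = Some g" using nu2_coset \<beta> g by simp
  have "V \<in> S' \<longleftrightarrow> \<nu> c = Some g"
    using ext_val_clear_denominator[OF V c] g assms vadd_eq_right_iff mem_S'_iff by metis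
  also have "\<dots> \<longleftrightarrow> \<nu>q (res c) = Some g"
    using nu2_coset[OF c(1)] mem_P_iff_same_val[OF c(1) _ ] \<beta> g by (auto split: if_splits)
  also have "\<dots> \<longleftrightarrow> psi V \<in> Q.S'"
    using ext_val_psi[OF V c] res_\<beta> vadd_eq_right_iff Q.mem_S'_iff psi_mem_G[OF assms] by metis
  finally show ?thesis by simp
qed

abbreviation "psi1 V \<equiv> Q.can_1 (psi V)"

lemma psi1_hom: "psi1 \<in> ring_hom R' Q.R1"
  using ring_hom_trans[OF psi_hom_R' Q.can_1_hom] by (simp add: comp_def)

lemma psi1_Units: "V \<in> S' \<Longrightarrow> psi1 V \<in> Units Q.R1"
  using Q.R1.frac_one_Units psi_mem_S'_iff by simp

sublocale to_Q1: localization_lift R' S' Q.R1 psi1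
  unfolding localization_lift_def localization_lift_axioms_def
  using R1.localization_axioms Q.R1_cring.cring_axioms psi1_hom psi1_Units by blast

abbreviation "Phi \<equiv> to_Q1.lift"

lemma Phi_surj: "Phi ` carrier R1 = carrier Q.R1"
proof
  show "Phi ` carrier R1 \<subseteq> carrier Q.R1" using ring_hom_closed[OF to_Q1.lift_hom] by auto
  show "carrier Q.R1 \<subseteq> Phi ` carrier R1"
  proof
    fix z assume z: "z \<in> carrier Q.R1"
    obtain W1 W2 where W: "W1 \<in> Q.G" "W2 \<in> Q.S'" "z \<otimes>\<^bsub>Q.R1\<^esub> Q.can_1 W2 = Q.can_1 W1"
      using Q.R1.is_localization_loc z unfolding is_localization_def by auto
    have "W2 \<in> Q.G" using W(2) by simp
    then obtain V1 V2 where V: "V1 \<in> G" "W1 = psi V1" "V2 \<in> G" "W2 = psi V2"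
      using psi_image_G[OF W(1)] psi_image_G by blast
    have V2: "V2 \<in> S'" using psi_mem_S'_iff V W by simp
    have "z = psi1 V1 \<otimes>\<^bsub>Q.R1\<^esub> inv\<^bsub>Q.R1\<^esub> psi1 V2"
      using Q.R1_cring.eq_mult_inv_iff[OF psi1_Units[OF V2] _ z] ring_hom_closed[OF psi1_hom] W V by simp
    also have "\<dots> = Phi (frac R' S' V1 V2)" using to_Q1.lift_frac V V2 by simp
    finally show "z \<in> Phi ` carrier R1" using V V2 R1.frac_closed by auto
  qed
qed

lemma frac_mem_P1_iff:
  assumes "V1 \<in> G" "V2 \<in> S'" "c \<in> carrier R" "\<beta> \<in> powers R b" "V1 \<otimes>\<^bsub>Rb\<^esub> can_b \<beta> = can_b c"
  shows "frac R' S' V1 V2 \<in> P1 \<longleftrightarrow> c \<in> P"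
proof -
  let ?Z = "frac R' S' V1 V2"
  have Z: "?Z \<in> carrier R1" using R1.frac_closed[OF _ assms(2)] assms(1) by simp
  have V2: "V2 \<in> G" "ext_val \<nu> V2 = Some 0" using assms(2) mem_S'_iff by auto
  have "?Z \<otimes>\<^bsub>R1\<^esub> can_1 V2 = can_1 V1" using R1.frac_mult_denom assms by simp
  moreover have "blowup_val \<nu> (?Z \<otimes>\<^bsub>R1\<^esub> can_1 V2) = vadd (blowup_val \<nu> ?Z) (blowup_val \<nu> (can_1 V2))"
    using R1_val.val_mult[OF Z can_1_closed[OF V2(1)]] .
  ultimately have "vadd (blowup_val \<nu> ?Z) (Some 0) = ext_val \<nu> V1"
    using blowup_val_can_1 assms(1) V2 by simp
  then have "blowup_val \<nu> ?Z = ext_val \<nu> V1" by (cases "blowup_val \<nu> ?Z") auto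
  then have shift: "vadd (blowup_val \<nu> ?Z) (\<nu> \<beta>) = \<nu> c"
    using ext_val_clear_denominator assms G_subset by auto
  have \<beta>: "\<beta> \<in> carrier R" "\<beta> \<notin> P" using powers_subset_compl_P assms(4) by auto
  have "(\<forall>\<delta>\<in>\<Delta>. vlt (Some \<delta>) (blowup_val \<nu> ?Z)) \<longleftrightarrow> c \<in> P"
    by (rule mem_P_shift_iff[OF \<beta> assms(3) shift])
  with Z show ?thesis unfolding center1_def by blast
qed

lemma Phi_frac_eq_zero_iff:
  assumes "V1 \<in> G" "V2 \<in> S'"
  shows "Phi (frac R' S' V1 V2) = \<zero>\<^bsub>Q.R1\<^esub> \<longleftrightarrow> psi1 V1 = \<zero>\<^bsub>Q.R1\<^esub>"
proof -
  have u: "inv\<^bsub>Q.R1\<^esub> psi1 V2 \<in> Units Q.R1" using Q.R1_cring.Units_inv_Units[OF psi1_Units[OF assms(2)]] .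
  have c: "psi1 V1 \<in> carrier Q.R1" using ring_hom_closed[OF psi1_hom] assms by simp
  have Phi: "Phi (frac R' S' V1 V2) = inv\<^bsub>Q.R1\<^esub> psi1 V2 \<otimes>\<^bsub>Q.R1\<^esub> psi1 V1"
    using to_Q1.lift_frac assms Q.R1_cring.m_comm[OF c Q.R1_cring.Units_closed[OF u]] by simp
  show ?thesis
  proof
    assume "Phi (frac R' S' V1 V2) = \<zero>\<^bsub>Q.R1\<^esub>"
    then show "psi1 V1 = \<zero>\<^bsub>Q.R1\<^esub>" using Phi Q.R1_cring.Units_mult_eq_zeroD[OF u c] by simp
  next
    assume "psi1 V1 = \<zero>\<^bsub>Q.R1\<^esub>"
    then show "Phi (frac R' S' V1 V2) = \<zero>\<^bsub>Q.R1\<^esub>"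
      using Phi Q.R1_cring.r_null[OF Q.R1_cring.Units_closed[OF u]] by simp
  qed
qed

lemma psi1_eq_zero_if_mem_P:
  assumes "V \<in> G" "c \<in> P" "\<beta> \<in> powers R b" "V \<otimes>\<^bsub>Rb\<^esub> can_b \<beta> = can_b c"
  shows "psi1 V = \<zero>\<^bsub>Q.R1\<^esub>"
proof -
  have c: "c \<in> carrier R" using assms(2) mem_P_iff by auto
  have V: "psi V \<in> carrier Q.Rb" using assms(1) G_subset by auto
  have u: "res_b \<beta> \<in> Units Q.Rb" by (rule res_b_Units[OF assms(3)])
  have "res_b c = \<zero>\<^bsub>Q.Rb\<^esub>"
    using coset_eq_P_iff[OF c] assms(2) Rq_zero ring_hom_zero[OF Q.can_b_hom Q.ring_axioms Q.Rb_cring.ring_axioms]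
    by simp
  moreover have "psi V \<otimes>\<^bsub>Q.Rb\<^esub> res_b \<beta> = res_b c"
    using psi_clear_denominator[OF _ c assms(3,4)] assms(1) G_subset by auto
  ultimately have "res_b \<beta> \<otimes>\<^bsub>Q.Rb\<^esub> psi V = \<zero>\<^bsub>Q.Rb\<^esub>"
    using Q.Rb_cring.m_comm[OF V Q.Rb_cring.Units_closed[OF u]] by simp
  then have "psi V = \<zero>\<^bsub>Q.Rb\<^esub>" using Q.Rb_cring.Units_mult_eq_zeroD[OF u V] by simp
  then show ?thesis
    using ring_hom_zero[OF Q.can_1_hom Q.R'_cring.ring_axioms Q.R1_cring.ring_axioms] by simp
qed

text \<open>Conversely, if \<open>psi V\<close> dies in the local ring of the quotient, it is killed by an element of
  value zero, which lifts to an element outside \<open>P\<close>; so \<open>c\<close> times an element outside \<open>P\<close>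
  lies in the prime \<open>P\<close>.\<close>

lemma mem_P_if_psi1_eq_zero:
  assumes "V \<in> G" "c \<in> carrier R" "\<beta> \<in> powers R b" "V \<otimes>\<^bsub>Rb\<^esub> can_b \<beta> = can_b c"
    and zero: "psi1 V = \<zero>\<^bsub>Q.R1\<^esub>"
  shows "c \<in> P"
proof -
  have V: "psi V \<in> carrier Q.Rb" using assms(1) G_subset by auto
  obtain W where W: "W \<in> Q.S'" "W \<otimes>\<^bsub>Q.R'\<^esub> psi V = \<zero>\<^bsub>Q.R'\<^esub>"
    using Q.R1.frac_one_eq_zeroD zero psi_mem_G[OF assms(1)] by (metis Q.R'_carrier)
  obtain d \<gamma> where d: "d \<in> carrier Rq" "\<gamma> \<in> powers Rq bb" "W \<otimes>\<^bsub>Q.Rb\<^esub> Q.can_b \<gamma> = Q.can_b d" "\<nu>q d = \<nu>q \<gamma>"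
    using Q.S'_clear_denominator[OF W(1)] by blast
  obtain d' where d': "d' \<in> carrier R" "d = res d'" using Rq_cases d by metis
  have "\<nu>q \<gamma> \<noteq> None" using Q.Rb.val_S_finite d by blast
  then have d'P: "d' \<notin> P" using d d' by (auto simp: nu2_coset)
  have "Q.can_b d \<otimes>\<^bsub>Q.Rb\<^esub> psi V = \<zero>\<^bsub>Q.Rb\<^esub>"
    by (rule Q.Rb_cring.mult_eq_zero_transfer[OF _ V _ _ d(3)])
      (use W d Q.G_subset Q.powers_subset ring_hom_closed[OF Q.can_b_hom] in auto)
  moreover have "psi V \<otimes>\<^bsub>Q.Rb\<^esub> res_b \<beta> = res_b c"
    using psi_clear_denominator[OF _ assms(2-4)] assms(1) G_subset by auto
  ultimately have "Q.can_b d \<otimes>\<^bsub>Q.Rb\<^esub> res_b c = \<zero>\<^bsub>Q.Rb\<^esub>"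
    using Q.Rb_cring.m_assoc[OF ring_hom_closed[OF Q.can_b_hom d(1)] V
        Q.Rb_cring.Units_closed[OF res_b_Units[OF assms(3)]]]
      Q.Rb_cring.Units_closed[OF res_b_Units[OF assms(3)]] by simp
  then have "Q.can_b (d \<otimes>\<^bsub>Rq\<^esub> res c) = \<zero>\<^bsub>Q.Rb\<^esub>"
    using ring_hom_mult[OF Q.can_b_hom d(1) res_closed[OF assms(2)]] by simp
  then obtain \<gamma>' where \<gamma>': "\<gamma>' \<in> powers Rq bb" "\<gamma>' \<otimes>\<^bsub>Rq\<^esub> (d \<otimes>\<^bsub>Rq\<^esub> res c) = \<zero>\<^bsub>Rq\<^esub>"
    using Q.Rb.frac_one_eq_zeroD d(1) res_closed[OF assms(2)] Q.m_closed unfolding loc_at_def by blast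
  obtain \<beta>' where \<beta>': "\<beta>' \<in> powers R b" "\<gamma>' = res \<beta>'" using powers_Rq \<gamma>' by blast
  have "\<beta>' \<in> carrier R - P" using powers_subset_compl_P \<beta>' by auto
  moreover have "res (\<beta>' \<otimes> (d' \<otimes> c)) = \<zero>\<^bsub>Rq\<^esub>"
    using \<gamma>' \<beta>' d' calculation assms(2) ring_hom_mult[OF coset_hom] by simp
  then have "\<beta>' \<otimes> (d' \<otimes> c) \<in> P" using coset_eq_P_iff Rq_zero calculation d' assms(2) by simp
  ultimately show "c \<in> P" using mult_mem_P_iff d' d'P assms(2) by auto
qed

lemma Phi_eq_zero_iff:
  assumes "Z \<in> carrier R1"
  shows "Phi Z = \<zero>\<^bsub>Q.R1\<^esub> \<longleftrightarrow> Z \<in> P1"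
proof -
  obtain V1 V2 where V: "V1 \<in> carrier R'" "V2 \<in> S'" "Z = frac R' S' V1 V2"
    using R1.loc_carrierE[OF assms] .
  have V1: "V1 \<in> G" using V(1) by simp
  obtain c \<beta> where c: "c \<in> carrier R" "\<beta> \<in> powers R b" "V1 \<otimes>\<^bsub>Rb\<^esub> can_b \<beta> = can_b c"
    using Rb_clear_denominator G_subset V1 by blast
  have "Z \<in> P1 \<longleftrightarrow> c \<in> P" using frac_mem_P1_iff[OF V1 V(2) c] V(3) by simp
  also have "\<dots> \<longleftrightarrow> psi1 V1 = \<zero>\<^bsub>Q.R1\<^esub>"
    using psi1_eq_zero_if_mem_P[OF V1 _ c(2,3)] mem_P_if_psi1_eq_zero[OF V1 c] by blast
  also have "\<dots> \<longleftrightarrow> Phi Z = \<zero>\<^bsub>Q.R1\<^esub>" using Phi_frac_eq_zero_iff[OF V1 V(2)] V(3) by simp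
  finally show ?thesis by simp
qed

lemma quotient_iso: "R1 Quot P1 \<simeq> Q.R1"
proof -
  interpret Phi: ring_hom_ring R1 Q.R1 Phi
    by (rule ring_hom_ringI2[OF R1_cring.ring_axioms Q.R1_cring.ring_axioms to_Q1.lift_hom])
  have "a_kernel R1 Q.R1 Phi = P1"
    using Phi_eq_zero_iff unfolding a_kernel_def kernel_def center1_def by auto
  then show ?thesis using Phi.FactRing_iso[OF Phi_surj] by simp
qed

end

theorem mainTheorem6:
  fixes R :: "'a ring" and m :: "'a set"
    and \<nu> :: "'a \<Rightarrow> 'g::linordered_ab_group_add option"
    and \<Delta> :: "'g set"
    and bbar :: "'a set" and abar :: "'a set list"
  assumes "noeth_local_ring R m"
    and "valuation R \<nu>" and "centered_on R m \<nu>"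
    and "convex_subgroup \<Delta> (value_group R \<nu>)"
    and "blowup_data (R Quot (center1 R \<nu> \<Delta>)) (nu2 R \<nu> (center1 R \<nu> \<Delta>)) bbar abar"
  shows "\<exists>b as. blowup_data R \<nu> b as \<and>
     (blowup R \<nu> b as) Quot (center1 (blowup R \<nu> b as) (blowup_val \<nu>) \<Delta>)
        \<simeq> blowup (R Quot (center1 R \<nu> \<Delta>)) (nu2 R \<nu> (center1 R \<nu> \<Delta>)) bbar abar \<and>
     loc_prime R (center1 R \<nu> \<Delta>)
        \<simeq> loc_prime (blowup R \<nu> b as) (center1 (blowup R \<nu> b as) (blowup_val \<nu>) \<Delta>)"
proof -
  interpret decomposition R \<nu> \<Delta>
    using assms(1-4) valuation_imp_prevaluation
    unfolding decomposition_def decomposition_axioms_def prevalued_cring_def prevalued_cring_axioms_def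
      noeth_local_ring_def centered_on_def by blast
  obtain b as where lift: "blowup_data R \<nu> b as" "b \<notin> P" "P +>\<^bsub>R\<^esub> b = bbar"
    "abar = map (\<lambda>a. P +>\<^bsub>R\<^esub> a) as"
    using blowup_data_liftE[OF assms(5)] .
  interpret quotient_blowup R \<nu> \<Delta> b as bbar abar
    using lift assms(5) decomposition_axioms has_center
    unfolding quotient_blowup_def quotient_blowup_axioms_def lifted_blowup_def lifted_blowup_axioms_def
      blowup_setting_def blowup_setting_axioms_def blowup_data_def vsupp_def
    by (auto simp: decomposition_def)
  let ?P1 = "center1 (blowup R \<nu> b as) (blowup_val \<nu>) \<Delta>"
  have "blowup R \<nu> b as Quot ?P1 \<simeq> blowup Rq \<nu>q bbar abar" "loc_prime R P \<simeq> loc_prime (blowup R \<nu> b as) ?P1"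
    unfolding blowup_eq Q.blowup_eq using quotient_iso loc_prime_iso by simp_all
  then show ?thesis using lift(1) by blast
qed

end
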